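(* Let $m,n$ be coprime positive integers and $G_{m,n}=\langle x,y\mid x^m=y^n\rangle$. Define $\Psi:X(G_{m,n})\to\mathbb{C}^3$ by $\Psi(\chi_\rho)=(\mathrm{tr}\,A,\mathrm{tr}\,B,\mathrm{tr}\,AB)$, where $\rho=(A,B)$, $A=\rho(x)$, $B=\rho(y)$. Then $\Psi$ is an isomorphism onto its image $C=\Psi(X(G_{m,n}))$. The curve $C$ has exactly $\frac{(m-1)(n-1)}{2}+1$ irreducible components, each smooth and isomorphic to $\mathbb{C}$: one component is the image of the locus $X_{red}$ of reducible characters, and the other $\frac{(m-1)(n-1)}{2}$ components are the images of the lines $X^{k,k'}_{irr}$ ($0<k<m$, $0<k'<n$, $k\equiv k'\pmod 2$) making up the closure $X_{irr}$ of the irreducible characters. These latter components are pairwise disjoint, each meets the reducible component in exactly two points, all these $(m-1)(n-1)$ intersection points are distinct, and at each of them the two components meet transversally, forming a nodal (normal crossing) singularity; $C$ has no other singularities.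
   Context: $G_{m,n}$ is the fundamental group of the complement of the $(m,n)$ torus knot. Representations $\rho:G_{m,n}\to\mathrm{SL}(2,\mathbb{C})$ are pairs $(A,B)\in\mathrm{SL}(2,\mathbb{C})^2$ with $A^m=B^n$; $X(G_{m,n})$ is the set of characters $\chi_\rho(g)=\mathrm{tr}\,\rho(g)$ with its Culler–Shalen algebraic structure. A representation is reducible if $A,B$ share an eigenvector, irreducible otherwise. $X_{red}$ is the set of reducible characters; it consists of the characters of $(\mathrm{diag}(t^n,t^{-n}),\mathrm{diag}(t^m,t^{-m}))$, $t\in\mathbb{C}^*$. $X_{irr}$ is the closure of the set of irreducible characters; it consists of the characters of the pairs $A=\mathrm{diag}(\lambda,\lambda^{-1})$, $B=P\,\mathrm{diag}(\mu,\mu^{-1})P^{-1}$ with $P=\begin{pmatrix}1&r-1\\1&r\end{pmatrix}$, $r\in\mathbb{C}$, where $\lambda=e^{\pi ik/m}$, $\mu=e^{\pi ik'/n}$, $0<k<m$, $0<k'<n$, $k\equiv k'\pmod 2$; for fixed $(k,k')$ these form the line $X^{k,k'}_{irr}$. *)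

theory Defs
  imports "HOL-Analysis.Analysis" "HOL-Computational_Algebra.Polynomial"
begin

type_synonym mat2 = "complex^2^2"
type_synonym pt3 = "complex \<times> complex \<times> complex"

text \<open>Matrix powers (the vector type is not a monoid under matrix product).\<close>
primrec mpow :: "mat2 \<Rightarrow> nat \<Rightarrow> mat2" where
  "mpow A 0 = mat 1"
| "mpow A (Suc k) = A ** mpow A k"

datatype letter = Lx | Ly | Lxi | Lyi

fun letter_mat :: "mat2 \<Rightarrow> mat2 \<Rightarrow> letter \<Rightarrow> mat2" where
  "letter_mat A B Lx = A"
| "letter_mat A B Ly = B"
| "letter_mat A B Lxi = matrix_inv A"
| "letter_mat A B Lyi = matrix_inv B"

primrec word_mat :: "mat2 \<Rightarrow> mat2 \<Rightarrow> letter list \<Rightarrow> mat2" where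
  "word_mat A B [] = mat 1"
| "word_mat A B (l # w) = letter_mat A B l ** word_mat A B w"

definition reps :: "nat \<Rightarrow> nat \<Rightarrow> (mat2 \<times> mat2) set" where
  "reps m n = {(A, B). det A = 1 \<and> det B = 1 \<and> mpow A m = mpow B n}"

text \<open>Character of the representation (A,B), as a function on words
  (it factors through G_{m,n}).\<close>
definition chi :: "mat2 \<Rightarrow> mat2 \<Rightarrow> letter list \<Rightarrow> complex" where
  "chi A B = (\<lambda>w. trace (word_mat A B w))"

definition charvar :: "nat \<Rightarrow> nat \<Rightarrow> (letter list \<Rightarrow> complex) set" where
  "charvar m n = (\<lambda>(A, B). chi A B) ` reps m n"

definition Psi :: "(letter list \<Rightarrow> complex) \<Rightarrow> pt3" where
  "Psi ch = (ch [Lx], ch [Ly], ch [Lx, Ly])"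

definition diagm :: "complex \<Rightarrow> mat2" where
  "diagm l = (\<chi> i j. if i = j then (if i = 1 then l else inverse l) else 0)"

definition Pmat :: "complex \<Rightarrow> mat2" where
  "Pmat r = (\<chi> i j. if j = 1 then 1 else (if i = 1 then r - 1 else r))"

definition Xred :: "nat \<Rightarrow> nat \<Rightarrow> (letter list \<Rightarrow> complex) set" where
  "Xred m n = {chi (diagm (t ^ n)) (diagm (t ^ m)) | t. t \<noteq> 0}"

definition Xirr_line :: "nat \<Rightarrow> nat \<Rightarrow> nat \<Rightarrow> nat \<Rightarrow> (letter list \<Rightarrow> complex) set" where
  "Xirr_line m n k k' =
     {chi (diagm (exp (pi * \<i> * of_nat k / of_nat m)))
          (Pmat r ** diagm (exp (pi * \<i> * of_nat k' / of_nat n)) ** matrix_inv (Pmat r)) | r. True}"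

definition irr_index :: "nat \<Rightarrow> nat \<Rightarrow> (nat \<times> nat) set" where
  "irr_index m n = {(k, k'). 0 < k \<and> k < m \<and> 0 < k' \<and> k' < n \<and> k mod 2 = k' mod 2}"

definition poly3_fun :: "(pt3 \<Rightarrow> complex) \<Rightarrow> bool" where
  "poly3_fun f \<longleftrightarrow> (\<exists>N c. \<forall>x y z. f (x, y, z) =
      (\<Sum>i\<le>N. \<Sum>j\<le>N. \<Sum>k\<le>N. c i j k * x ^ i * y ^ j * z ^ k))"

definition zclosed :: "pt3 set \<Rightarrow> bool" where
  "zclosed S \<longleftrightarrow> (\<exists>F. (\<forall>f\<in>F. poly3_fun f) \<and> S = {p. \<forall>f\<in>F. f p = 0})"

definition zirred :: "pt3 set \<Rightarrow> bool" where
  "zirred S \<longleftrightarrow> zclosed S \<and> S \<noteq> {} \<and>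
     (\<forall>A B. zclosed A \<longrightarrow> zclosed B \<longrightarrow> S \<subseteq> A \<union> B \<longrightarrow> S \<subseteq> A \<or> S \<subseteq> B)"

definition zcomponents :: "pt3 set \<Rightarrow> pt3 set set" where
  "zcomponents S = {T. T \<subseteq> S \<and> zirred T \<and>
      (\<forall>T'. T \<subseteq> T' \<longrightarrow> T' \<subseteq> S \<longrightarrow> zirred T' \<longrightarrow> T' = T)}"

type_synonym pcurve = "complex poly \<times> complex poly \<times> complex poly"

definition pc_eval :: "pcurve \<Rightarrow> complex \<Rightarrow> pt3" where
  "pc_eval \<phi> t = (case \<phi> of (p1, p2, p3) \<Rightarrow> (poly p1 t, poly p2 t, poly p3 t))"

definition pc_deriv :: "pcurve \<Rightarrow> complex \<Rightarrow> pt3" where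
  "pc_deriv \<phi> t = (case \<phi> of (p1, p2, p3) \<Rightarrow>
      (poly (pderiv p1) t, poly (pderiv p2) t, poly (pderiv p3) t))"

definition iso_to_line :: "pcurve \<Rightarrow> pt3 set \<Rightarrow> bool" where
  "iso_to_line \<phi> S \<longleftrightarrow> bij_betw (pc_eval \<phi>) UNIV S \<and>
     (\<exists>g. poly3_fun g \<and> (\<forall>t. g (pc_eval \<phi> t) = t))"

definition lin_indep2 :: "pt3 \<Rightarrow> pt3 \<Rightarrow> bool" where
  "lin_indep2 u v \<longleftrightarrow> (\<forall>a b. (case u of (u1, u2, u3) \<Rightarrow> case v of (v1, v2, v3) \<Rightarrow>
       a * u1 + b * v1 = 0 \<and> a * u2 + b * v2 = 0 \<and> a * u3 + b * v3 = 0) \<longrightarrow> a = 0 \<and> b = 0)"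

definition transversal_at :: "pt3 set \<Rightarrow> pt3 set \<Rightarrow> pt3 \<Rightarrow> bool" where
  "transversal_at S1 S2 p \<longleftrightarrow> (\<exists>\<phi>1 \<phi>2 t1 t2. iso_to_line \<phi>1 S1 \<and> iso_to_line \<phi>2 S2 \<and>
      pc_eval \<phi>1 t1 = p \<and> pc_eval \<phi>2 t2 = p \<and> lin_indep2 (pc_deriv \<phi>1 t1) (pc_deriv \<phi>2 t2))"

end

theory Submission
  imports Defs
begin

text \<open>Every trace function of a pair (A, B) in SL(2,C) is a polynomial in
  x = tr A, y = tr B, z = tr AB, because A, B and their inverses act on the span of
  1, A, B, AB with coefficients polynomial in (x, y, z); hence Psi is injective with
  polynomial inverse on all characters.

  If A^m = B^n is not scalar, A and B commute with it and share its eigenvector; if A or B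
  is scalar they trivially share one. A common eigenvector with eigenvalues a, b gives
  a^m = b^n, and coprimality (Bezout) gives t with a = t^n, b = t^m, so the trace triple is
  (C_n(s), C_m(s), C_{n+m}(s)) with s = t + 1/t and C_k(t + 1/t) = t^k + t^-k. Otherwise
  A^m = B^n = (-1)^k is scalar while A, B are not, forcing tr A = 2 cos(pi k/m),
  tr B = 2 cos(pi k'/n) with k, k' of equal parity: a vertical line in C^3, all of whose
  points are traces of the explicit representations of X^{k,k'}_irr.

  The reducible curve is a copy of C because s is recovered polynomially from
  (C_a(s), C_b(s), C_{a+b}(s)) for coprime a, b by the Euclidean algorithm, using
  C_a C_b = C_{a+b} + C_{a-b}. The line of index (k, k') meets it exactly where
  t^n = lambda^(+-1), t^m = mu^(+-1), i.e. at two points whose third coordinates differ by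
  (lambda - 1/lambda)(mu - 1/mu) \<noteq> 0, and there C_n'(s) (t - 1/t) = n (t^n - t^-n) \<noteq> 0,
  so the two tangent directions are independent.\<close>

section \<open>Polynomial functions on C^3\<close>

definition monomial3 :: "nat \<times> nat \<times> nat \<Rightarrow> pt3 \<Rightarrow> complex" where
  "monomial3 e p = (case e of (i, j, k) \<Rightarrow> case p of (x, y, z) \<Rightarrow> x ^ i * y ^ j * z ^ k)"

lemma sum_cube_monomial3:
  "(\<Sum>i\<le>N. \<Sum>j\<le>N. \<Sum>k\<le>N. c i j k * x ^ i * y ^ j * z ^ k)
   = (\<Sum>e\<in>{..N}\<times>{..N}\<times>{..N}. (case e of (i, j, k) \<Rightarrow> c i j k) * monomial3 e (x, y, z))"
  by (simp add: sum.cartesian_product monomial3_def case_prod_beta mult.assoc)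

lemma poly3_funI_monomials:
  fixes S :: "'a set" and c :: "'a \<Rightarrow> complex" and e :: "'a \<Rightarrow> nat \<times> nat \<times> nat"
  assumes "finite S" and "\<And>p. f p = (\<Sum>q\<in>S. c q * monomial3 (e q) p)"
  shows "poly3_fun f"
proof -
  define N where "N = Max ((\<lambda>q. fst (e q) + fst (snd (e q)) + snd (snd (e q))) ` S)"
  have e_le_N: "e q \<in> {..N}\<times>{..N}\<times>{..N}" if "q \<in> S" for q
  proof -
    have "fst (e q) + fst (snd (e q)) + snd (snd (e q)) \<le> N"
      unfolding N_def by (rule Max_ge) (use assms(1) that in auto)
    then show ?thesis by (auto simp: mem_Times_iff)
  qed
  define d where "d i j k = (\<Sum>q\<in>{q\<in>S. e q = (i, j, k)}. c q)" for i j k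
  have "f (x, y, z) = (\<Sum>i\<le>N. \<Sum>j\<le>N. \<Sum>k\<le>N. d i j k * x ^ i * y ^ j * z ^ k)" for x y z
  proof -
    have "f (x, y, z) = (\<Sum>t\<in>e ` S. \<Sum>q\<in>{q\<in>S. e q = t}. c q * monomial3 (e q) (x, y, z))"
      unfolding assms(2) by (rule sum.image_gen[OF assms(1)])
    also have "\<dots> = (\<Sum>t\<in>e ` S. (case t of (i, j, k) \<Rightarrow> d i j k) * monomial3 t (x, y, z))"
      by (auto simp: d_def sum_distrib_right case_prod_beta intro!: sum.cong)
    also have "\<dots> = (\<Sum>t\<in>{..N}\<times>{..N}\<times>{..N}. (case t of (i, j, k) \<Rightarrow> d i j k) * monomial3 t (x, y, z))"
    proof (rule sum.mono_neutral_left)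
      show "\<forall>t\<in>{..N}\<times>{..N}\<times>{..N} - e ` S. (case t of (i, j, k) \<Rightarrow> d i j k) * monomial3 t (x, y, z) = 0"
      proof clarify
        fix i j k assume "(i, j, k) \<notin> e ` S"
        then have "{q\<in>S. e q = (i, j, k)} = {}" by force
        then show "d i j k * monomial3 (i, j, k) (x, y, z) = 0"
          unfolding d_def by (simp only: sum.empty mult_zero_left)
      qed
    qed (use assms(1) e_le_N in force)+
    finally show ?thesis by (simp add: sum_cube_monomial3)
  qed
  then show ?thesis unfolding poly3_fun_def by blast
qed

lemma poly3_funE_monomials:
  assumes "poly3_fun f"
  obtains S :: "(nat \<times> nat \<times> nat) set" and c
  where "finite S" "\<And>p. f p = (\<Sum>q\<in>S. c q * monomial3 q p)"
proof -
  obtain N c where "\<forall>x y z. f (x, y, z) = (\<Sum>i\<le>N. \<Sum>j\<le>N. \<Sum>k\<le>N. c i j k * x ^ i * y ^ j * z ^ k)"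
    using assms unfolding poly3_fun_def by blast
  then have "f p = (\<Sum>e\<in>{..N}\<times>{..N}\<times>{..N}. (case e of (i, j, k) \<Rightarrow> c i j k) * monomial3 e p)" for p
    by (cases p) (simp add: sum_cube_monomial3)
  then show ?thesis using that[of "{..N}\<times>{..N}\<times>{..N}"] by blast
qed

lemma poly3_fun_add:
  assumes "poly3_fun f" "poly3_fun g" shows "poly3_fun (\<lambda>p. f p + g p)"
proof -
  obtain S c where S: "finite S" "\<And>p. f p = (\<Sum>q\<in>S. c q * monomial3 q p)"
    using poly3_funE_monomials[OF assms(1)] by blast
  obtain T d where T: "finite T" "\<And>p. g p = (\<Sum>q\<in>T. d q * monomial3 q p)"
    using poly3_funE_monomials[OF assms(2)] by blast
  have "f p + g p = (\<Sum>q\<in>S <+> T. case_sum c d q * monomial3 (case_sum id id q) p)" for p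
    unfolding Plus_def using S T
    by (subst sum.union_disjoint) (auto simp: sum.reindex)
  then show ?thesis by (rule poly3_funI_monomials[rotated]) (use S T in simp)
qed

lemma poly3_fun_mult:
  assumes "poly3_fun f" "poly3_fun g" shows "poly3_fun (\<lambda>p. f p * g p)"
proof -
  obtain S c where S: "finite S" "\<And>p. f p = (\<Sum>q\<in>S. c q * monomial3 q p)"
    using poly3_funE_monomials[OF assms(1)] by blast
  obtain T d where T: "finite T" "\<And>p. g p = (\<Sum>q\<in>T. d q * monomial3 q p)"
    using poly3_funE_monomials[OF assms(2)] by blast
  define e where "e = (\<lambda>((a1::nat, b1::nat, c1::nat), (a2::nat, b2::nat, c2::nat)). (a1 + a2, b1 + b2, c1 + c2))"
  have "f p * g p = (\<Sum>(q, r)\<in>S \<times> T. c q * d r * monomial3 (e (q, r)) p)" for p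
  proof -
    have "f p * g p = (\<Sum>(q, r)\<in>S \<times> T. c q * monomial3 q p * (d r * monomial3 r p))"
      by (simp add: S(2) T(2) sum_product sum.cartesian_product)
    also have "\<dots> = (\<Sum>(q, r)\<in>S \<times> T. c q * d r * monomial3 (e (q, r)) p)"
      by (rule sum.cong) (auto simp: monomial3_def power_add e_def split: prod.splits)
    finally show ?thesis .
  qed
  then show ?thesis
    by (intro poly3_funI_monomials[where S = "S \<times> T" and e = e and c = "\<lambda>(q, r). c q * d r"])
       (use S T in \<open>auto simp: case_prod_beta\<close>)
qed

lemma poly3_fun_const: "poly3_fun (\<lambda>p. a)"
  by (rule poly3_funI_monomials[where S = "{()}" and c = "\<lambda>_. a" and e = "\<lambda>_. (0, 0, 0)"])
     (auto simp: monomial3_def split: prod.splits)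

lemma poly3_fun_fst: "poly3_fun (\<lambda>p. fst p)"
  by (rule poly3_funI_monomials[where S = "{()}" and c = "\<lambda>_. 1" and e = "\<lambda>_. (1, 0, 0)"])
     (auto simp: monomial3_def split: prod.splits)

lemma poly3_fun_fst_snd: "poly3_fun (\<lambda>p. fst (snd p))"
  by (rule poly3_funI_monomials[where S = "{()}" and c = "\<lambda>_. 1" and e = "\<lambda>_. (0, 1, 0)"])
     (auto simp: monomial3_def split: prod.splits)

lemma poly3_fun_snd_snd: "poly3_fun (\<lambda>p. snd (snd p))"
  by (rule poly3_funI_monomials[where S = "{()}" and c = "\<lambda>_. 1" and e = "\<lambda>_. (0, 0, 1)"])
     (auto simp: monomial3_def split: prod.splits)

lemma poly3_fun_sum:
  assumes "finite A" "\<And>a. a \<in> A \<Longrightarrow> poly3_fun (f a)" shows "poly3_fun (\<lambda>p. \<Sum>a\<in>A. f a p)"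
  using assms by (induction A rule: finite_induct) (auto intro: poly3_fun_add poly3_fun_const)

lemma poly3_fun_power:
  assumes "poly3_fun f" shows "poly3_fun (\<lambda>p. f p ^ k)"
  by (induction k) (auto intro: poly3_fun_mult poly3_fun_const assms)

lemma poly3_fun_diff:
  assumes "poly3_fun f" "poly3_fun g" shows "poly3_fun (\<lambda>p. f p - g p)"
proof -
  have "poly3_fun (\<lambda>p. f p + (-1) * g p)"
    by (intro poly3_fun_add poly3_fun_mult poly3_fun_const assms)
  then show ?thesis by simp
qed

lemma poly3_fun_uminus:
  assumes "poly3_fun f" shows "poly3_fun (\<lambda>p. - f p)"
  using poly3_fun_diff[OF poly3_fun_const assms, of 0] by simp

lemma poly3_fun_compose:
  assumes "poly3_fun f" "poly3_fun g1" "poly3_fun g2" "poly3_fun g3"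
  shows "poly3_fun (\<lambda>p. f (g1 p, g2 p, g3 p))"
proof -
  obtain S c where S: "finite S" "\<And>p. f p = (\<Sum>q\<in>S. c q * monomial3 q p)"
    using poly3_funE_monomials[OF assms(1)] by blast
  have "poly3_fun (\<lambda>p. \<Sum>q\<in>S. c q * (g1 p ^ fst q * g2 p ^ fst (snd q) * g3 p ^ snd (snd q)))"
    by (intro poly3_fun_sum S poly3_fun_mult poly3_fun_const poly3_fun_power assms)
  then show ?thesis by (simp add: S(2) monomial3_def case_prod_beta)
qed

lemma poly3_fun_poly:
  assumes "poly3_fun g" shows "poly3_fun (\<lambda>p. poly q (g p))"
  unfolding poly_altdef
  by (intro poly3_fun_sum poly3_fun_mult poly3_fun_const poly3_fun_power assms) auto

lemma poly3_fun_pc_eval: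
  assumes "poly3_fun f" obtains r where "\<And>t. f (pc_eval \<phi> t) = poly r t"
proof -
  obtain p1 p2 p3 where \<phi>: "\<phi> = (p1, p2, p3)" by (cases \<phi>) auto
  obtain S c where S: "finite S" "\<And>p. f p = (\<Sum>q\<in>S. c q * monomial3 q p)"
    using poly3_funE_monomials[OF assms(1)] by blast
  show ?thesis
    by (rule that[of "\<Sum>q\<in>S. smult (c q) (p1 ^ fst q * p2 ^ fst (snd q) * p3 ^ snd (snd q))"])
       (simp add: S(2) poly_sum \<phi> pc_eval_def monomial3_def case_prod_beta)
qed


section \<open>Zariski-closed subsets of C^3\<close>

lemma zclosed_empty: "zclosed {}"
  unfolding zclosed_def by (rule exI[of _ "{\<lambda>_. 1}"]) (auto intro: poly3_fun_const)

lemma zclosed_Un: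
  assumes "zclosed A" "zclosed B" shows "zclosed (A \<union> B)"
proof -
  obtain F where F: "\<forall>f\<in>F. poly3_fun f" "A = {p. \<forall>f\<in>F. f p = 0}"
    using assms(1) unfolding zclosed_def by blast
  obtain G where G: "\<forall>g\<in>G. poly3_fun g" "B = {p. \<forall>g\<in>G. g p = 0}"
    using assms(2) unfolding zclosed_def by blast
  define H where "H = (\<lambda>(f, g) p. f p * g p) ` (F \<times> G)"
  have "\<forall>h\<in>H. poly3_fun h" unfolding H_def using F(1) G(1) by (auto intro: poly3_fun_mult)
  moreover have "A \<union> B = {p. \<forall>h\<in>H. h p = 0}"
  proof (intro set_eqI iffI)
    fix p assume "p \<in> {p. \<forall>h\<in>H. h p = 0}"
    then have "f p * g p = 0" if "f \<in> F" "g \<in> G" for f g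
      using that unfolding H_def by fastforce
    then show "p \<in> A \<union> B" unfolding F(2) G(2) by auto
  qed (auto simp: H_def F(2) G(2))
  ultimately show ?thesis unfolding zclosed_def by blast
qed

lemma zclosed_Union:
  assumes "finite FF" "\<forall>F\<in>FF. zclosed F" shows "zclosed (\<Union>FF)"
  using assms by (induction FF rule: finite_induct) (auto intro: zclosed_empty zclosed_Un)

lemma zirred_subset_Union:
  assumes "finite FF" "zirred T" "\<forall>F\<in>FF. zclosed F" "T \<subseteq> \<Union>FF"
  obtains F where "F \<in> FF" "T \<subseteq> F"
  using assms
proof (induction FF arbitrary: thesis rule: finite_induct)
  case empty then show ?case unfolding zirred_def by auto
next
  case (insert F FF)
  have "zclosed F" "zclosed (\<Union>FF)" using insert by (auto intro: zclosed_Union)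
  then have "T \<subseteq> F \<or> T \<subseteq> \<Union>FF"
    using insert.prems unfolding zirred_def by (metis Union_insert)
  then show ?case using insert by blast
qed

lemma Union_zcomponents_subset: "\<Union>(zcomponents S) \<subseteq> S"
  unfolding zcomponents_def by blast

lemma zcomponents_Union:
  assumes "finite FF" "\<forall>F\<in>FF. zirred F" "\<forall>F\<in>FF. \<forall>F'\<in>FF. F \<subseteq> F' \<longrightarrow> F = F'"
  shows "zcomponents (\<Union>FF) = FF"
proof -
  have closed: "\<forall>F\<in>FF. zclosed F" using assms(2) unfolding zirred_def by blast
  show ?thesis
  proof (intro set_eqI iffI)
    fix T assume "T \<in> zcomponents (\<Union>FF)"
    then have T: "T \<subseteq> \<Union>FF" "zirred T" "\<And>T'. T \<subseteq> T' \<Longrightarrow> T' \<subseteq> \<Union>FF \<Longrightarrow> zirred T' \<Longrightarrow> T' = T"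
      unfolding zcomponents_def by auto
    obtain F where "F \<in> FF" "T \<subseteq> F" using zirred_subset_Union[OF assms(1) T(2) closed T(1)] .
    with T(3) assms(2) show "T \<in> FF" by (metis Union_upper)
  next
    fix T assume T: "T \<in> FF"
    have "T' = T" if T': "T \<subseteq> T'" "T' \<subseteq> \<Union>FF" "zirred T'" for T'
    proof -
      obtain F where "F \<in> FF" "T' \<subseteq> F" using zirred_subset_Union[OF assms(1) T'(3) closed T'(2)] .
      with assms(3) T T'(1) show ?thesis by blast
    qed
    then show "T \<in> zcomponents (\<Union>FF)" unfolding zcomponents_def using T assms(2) by blast
  qed
qed

text \<open>Polynomial functions pull back to one-variable polynomials along the curve, and the
  product of two nonzero ones has only finitely many roots.\<close>
lemma zirred_range_pc_eval:
  assumes "zclosed (range (pc_eval \<phi>))" shows "zirred (range (pc_eval \<phi>))"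
  unfolding zirred_def
proof (intro conjI allI impI assms)
  show "range (pc_eval \<phi>) \<noteq> {}" by simp
  fix A B assume A: "zclosed A" and B: "zclosed B" and sub: "range (pc_eval \<phi>) \<subseteq> A \<union> B"
  show "range (pc_eval \<phi>) \<subseteq> A \<or> range (pc_eval \<phi>) \<subseteq> B"
  proof (rule ccontr)
    assume "\<not> ?thesis"
    then obtain t0 t1 where t0: "pc_eval \<phi> t0 \<notin> A" and t1: "pc_eval \<phi> t1 \<notin> B" by blast
    obtain F where F: "\<forall>f\<in>F. poly3_fun f" "A = {p. \<forall>f\<in>F. f p = 0}" using A unfolding zclosed_def by blast
    obtain G where G: "\<forall>g\<in>G. poly3_fun g" "B = {p. \<forall>g\<in>G. g p = 0}" using B unfolding zclosed_def by blast
    obtain f where f: "f \<in> F" "f (pc_eval \<phi> t0) \<noteq> 0" using t0 F(2) by auto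
    obtain g where g: "g \<in> G" "g (pc_eval \<phi> t1) \<noteq> 0" using t1 G(2) by auto
    obtain r1 where r1: "\<And>t. f (pc_eval \<phi> t) = poly r1 t" using poly3_fun_pc_eval F(1) f(1) by blast
    obtain r2 where r2: "\<And>t. g (pc_eval \<phi> t) = poly r2 t" using poly3_fun_pc_eval G(1) g(1) by blast
    have "r1 * r2 \<noteq> 0" using f(2) g(2) r1 r2 by auto
    then have "finite {t. poly (r1 * r2) t = 0}" by (rule poly_roots_finite)
    moreover have "{t. poly (r1 * r2) t = 0} = UNIV"
      using sub F(2) G(2) f(1) g(1) r1 r2 by (fastforce simp: image_subset_iff)
    ultimately show False using infinite_UNIV_char_0 by metis
  qed
qed

lemma zclosed_iso_to_line:
  assumes "iso_to_line \<phi> S" shows "zclosed S"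
proof -
  obtain g where g: "poly3_fun g" "\<And>t. g (pc_eval \<phi> t) = t"
    using assms unfolding iso_to_line_def by blast
  have S: "S = range (pc_eval \<phi>)" using assms unfolding iso_to_line_def bij_betw_def by blast
  obtain p1 p2 p3 where \<phi>: "\<phi> = (p1, p2, p3)" by (cases \<phi>) auto
  define F where "F = {\<lambda>p. fst p - poly p1 (g p), \<lambda>p. fst (snd p) - poly p2 (g p),
    \<lambda>p. snd (snd p) - poly p3 (g p)}"
  have "\<forall>f\<in>F. poly3_fun f"
    unfolding F_def
    by (auto intro!: poly3_fun_diff poly3_fun_poly g poly3_fun_fst poly3_fun_fst_snd poly3_fun_snd_snd)
  moreover have "S = {p. \<forall>f\<in>F. f p = 0}"
  proof (intro set_eqI iffI)
    fix p assume "p \<in> {p. \<forall>f\<in>F. f p = 0}"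
    then have "p = pc_eval \<phi> (g p)" by (cases p) (auto simp: F_def \<phi> pc_eval_def)
    then show "p \<in> S" using S by blast
  qed (use S g(2) in \<open>auto simp: F_def \<phi> pc_eval_def\<close>)
  ultimately show ?thesis unfolding zclosed_def by blast
qed

lemma zirred_iso_to_line:
  assumes "iso_to_line \<phi> S" shows "zirred S"
proof -
  have "S = range (pc_eval \<phi>)" using assms unfolding iso_to_line_def bij_betw_def by blast
  then show ?thesis using zirred_range_pc_eval zclosed_iso_to_line[OF assms] by simp
qed


section \<open>Traces of words in SL(2,C)\<close>

lemma mat2_eq_iff:
  "(A::mat2) = B \<longleftrightarrow> A$1$1 = B$1$1 \<and> A$1$2 = B$1$2 \<and> A$2$1 = B$2$1 \<and> A$2$2 = B$2$2"
  by (simp add: vec_eq_iff forall_2)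

lemma mat2_mult_nth: "((A::mat2) ** B)$i$j = A$i$1 * B$1$j + A$i$2 * B$2$j"
  by (simp add: matrix_matrix_mult_def sum_2)

lemma trace_mat2: "trace (A::mat2) = A$1$1 + A$2$2"
  by (simp add: trace_def sum_2)

lemma mat2_one_nth:
  "(mat 1::mat2)$1$1 = 1" "(mat 1::mat2)$2$2 = 1" "(mat 1::mat2)$1$2 = 0" "(mat 1::mat2)$2$1 = 0"
  by (simp_all add: mat_def)

lemma matrix_inv_eqI:
  fixes A A' :: mat2
  assumes "A ** A' = mat 1" "A' ** A = mat 1" shows "matrix_inv A = A'"
proof -
  let ?P = "\<lambda>A''. A ** A'' = mat 1 \<and> A'' ** A = mat 1"
  have inv: "?P (matrix_inv A)" unfolding matrix_inv_def by (rule someI[of ?P A']) (use assms in auto)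
  then have "matrix_inv A = matrix_inv A ** (A ** A')" by (simp add: assms)
  also have "\<dots> = A'" using inv by (simp add: matrix_mul_assoc)
  finally show ?thesis .
qed

definition adjugate2 :: "mat2 \<Rightarrow> mat2" where
  "adjugate2 A = (\<chi> i j. if i = j then (if i = 1 then A$2$2 else A$1$1) else - A$i$j)"

lemma adjugate2_nth:
  "adjugate2 A $1$1 = A$2$2" "adjugate2 A $2$2 = A$1$1"
  "adjugate2 A $1$2 = - A$1$2" "adjugate2 A $2$1 = - A$2$1"
  by (simp_all add: adjugate2_def)

lemma matrix_inv_det1: assumes "det (A::mat2) = 1" shows "matrix_inv A = adjugate2 A"
  by (rule matrix_inv_eqI)
     (use assms in \<open>auto simp: mat2_eq_iff mat2_mult_nth adjugate2_nth mat2_one_nth det_2 algebra_simps\<close>)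

definition comb4 :: "complex \<Rightarrow> complex \<Rightarrow> complex \<Rightarrow> complex \<Rightarrow> mat2 \<Rightarrow> mat2 \<Rightarrow> mat2" where
  "comb4 a b c d A B = (\<chi> i j. a * (mat 1::mat2)$i$j + b * A$i$j + c * B$i$j + d * (A ** B)$i$j)"

lemma comb4_nth:
  "comb4 a b c d A B $ i $ j = a * (mat 1::mat2)$i$j + b * A$i$j + c * B$i$j + d * (A ** B)$i$j"
  by (simp add: comb4_def)

lemma trace_comb4: "trace (comb4 a b c d A B) = 2 * a + b * trace A + c * trace B + d * trace (A ** B)"
  by (simp add: trace_mat2 comb4_nth mat2_one_nth algebra_simps)

text \<open>Cayley-Hamilton for A and B, written in the basis I, A, B, AB.\<close>
lemma mult_comb4_left:
  assumes "det (A::mat2) = 1"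
  shows "A ** comb4 a b c d A B = comb4 (-b) (a + trace A * b) (-d) (c + trace A * d) A B"
  using assms unfolding mat2_eq_iff mat2_mult_nth comb4_nth trace_mat2 mat2_one_nth det_2
  by (intro conjI; algebra)

lemma mult_comb4_right:
  assumes "det (B::mat2) = 1"
  shows "B ** comb4 a b c d A B = comb4 (b * (trace (A ** B) - trace A * trace B) - c - trace A * d)
    (trace B * b + d) (a + trace A * b + trace B * c + trace (A ** B) * d) (-b) A B"
  using assms unfolding mat2_eq_iff mat2_mult_nth comb4_nth trace_mat2 mat2_one_nth det_2
  by (intro conjI; algebra)

lemma inv_mult_comb4_left:
  assumes "det (A::mat2) = 1"
  shows "matrix_inv A ** comb4 a b c d A B = comb4 (trace A * a + b) (-a) (trace A * c + d) (-c) A B"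
  using assms unfolding matrix_inv_det1[OF assms] mat2_eq_iff mat2_mult_nth comb4_nth trace_mat2
    mat2_one_nth det_2 adjugate2_nth
  by (intro conjI; algebra)

lemma inv_mult_comb4_right:
  assumes "det (B::mat2) = 1"
  shows "matrix_inv B ** comb4 a b c d A B = comb4
    (trace B * a - b * (trace (A ** B) - trace A * trace B) + c + trace A * d) (-d)
    (-a - trace A * b - trace (A ** B) * d) (trace B * d + b) A B"
  using assms unfolding matrix_inv_det1[OF assms] mat2_eq_iff mat2_mult_nth comb4_nth trace_mat2
    mat2_one_nth det_2 adjugate2_nth
  by (intro conjI; algebra)

definition trace_triple :: "mat2 \<Rightarrow> mat2 \<Rightarrow> pt3" where
  "trace_triple A B = (trace A, trace B, trace (A ** B))"

lemma Psi_chi: "Psi (chi A B) = trace_triple A B"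
  by (simp add: Psi_def chi_def trace_triple_def)

lemma word_mat_comb4:
  obtains a b c d where "poly3_fun a" "poly3_fun b" "poly3_fun c" "poly3_fun d"
    "\<And>A B. det A = 1 \<Longrightarrow> det B = 1 \<Longrightarrow> word_mat A B w =
       comb4 (a (trace_triple A B)) (b (trace_triple A B)) (c (trace_triple A B)) (d (trace_triple A B)) A B"
proof (induction w arbitrary: thesis)
  case Nil
  show ?case
    by (rule Nil[of "\<lambda>_. 1" "\<lambda>_. 0" "\<lambda>_. 0" "\<lambda>_. 0"])
       (simp_all add: poly3_fun_const mat2_eq_iff comb4_nth mat2_one_nth)
next
  case (Cons l w)
  obtain a b c d where P: "poly3_fun a" "poly3_fun b" "poly3_fun c" "poly3_fun d"
    and w: "\<And>A B. det A = 1 \<Longrightarrow> det B = 1 \<Longrightarrow> word_mat A B w =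
       comb4 (a (trace_triple A B)) (b (trace_triple A B)) (c (trace_triple A B)) (d (trace_triple A B)) A B"
    using Cons.IH by blast
  let ?x = "\<lambda>p::pt3. fst p" and ?y = "\<lambda>p::pt3. fst (snd p)" and ?z = "\<lambda>p::pt3. snd (snd p)"
  note poly3 = poly3_fun_add poly3_fun_mult poly3_fun_diff poly3_fun_uminus poly3_fun_const
    poly3_fun_fst poly3_fun_fst_snd poly3_fun_snd_snd P
  show ?case
  proof (cases l)
    case Lx
    show ?thesis
      by (rule Cons.prems[of "\<lambda>p. - b p" "\<lambda>p. a p + ?x p * b p" "\<lambda>p. - d p" "\<lambda>p. c p + ?x p * d p"])
         (auto simp: Lx w mult_comb4_left trace_triple_def intro!: poly3)
  next
    case Ly
    show ?thesis
      by (rule Cons.prems[of "\<lambda>p. b p * (?z p - ?x p * ?y p) - c p - ?x p * d p" "\<lambda>p. ?y p * b p + d p"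
            "\<lambda>p. a p + ?x p * b p + ?y p * c p + ?z p * d p" "\<lambda>p. - b p"])
         (auto simp: Ly w mult_comb4_right trace_triple_def intro!: poly3)
  next
    case Lxi
    show ?thesis
      by (rule Cons.prems[of "\<lambda>p. ?x p * a p + b p" "\<lambda>p. - a p" "\<lambda>p. ?x p * c p + d p" "\<lambda>p. - c p"])
         (auto simp: Lxi w inv_mult_comb4_left trace_triple_def intro!: poly3)
  next
    case Lyi
    show ?thesis
      by (rule Cons.prems[of "\<lambda>p. ?y p * a p - b p * (?z p - ?x p * ?y p) + c p + ?x p * d p" "\<lambda>p. - d p"
            "\<lambda>p. - a p - ?x p * b p - ?z p * d p" "\<lambda>p. ?y p * d p + b p"])
         (auto simp: Lyi w inv_mult_comb4_right trace_triple_def intro!: poly3)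
  qed
qed

lemma chi_poly3_trace_triple:
  obtains P where "poly3_fun P" "\<And>A B. det A = 1 \<Longrightarrow> det B = 1 \<Longrightarrow> chi A B w = P (trace_triple A B)"
proof -
  obtain a b c d where P: "poly3_fun a" "poly3_fun b" "poly3_fun c" "poly3_fun d"
    and w: "\<And>A B. det A = 1 \<Longrightarrow> det B = 1 \<Longrightarrow> word_mat A B w =
       comb4 (a (trace_triple A B)) (b (trace_triple A B)) (c (trace_triple A B)) (d (trace_triple A B)) A B"
    using word_mat_comb4 by blast
  show ?thesis
    by (rule that[of "\<lambda>p. 2 * a p + b p * fst p + c p * fst (snd p) + d p * snd (snd p)"])
       (auto simp: chi_def w trace_comb4 trace_triple_def
         intro!: poly3_fun_add poly3_fun_mult poly3_fun_const poly3_fun_fst poly3_fun_fst_snd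
           poly3_fun_snd_snd P)
qed

lemma inj_on_Psi_charvar: "inj_on Psi (charvar m n)"
proof (rule inj_onI)
  fix ch1 ch2 assume ch: "ch1 \<in> charvar m n" "ch2 \<in> charvar m n" "Psi ch1 = Psi ch2"
  obtain A1 B1 where 1: "det A1 = 1" "det B1 = 1" "ch1 = chi A1 B1"
    using ch(1) unfolding charvar_def reps_def by auto
  obtain A2 B2 where 2: "det A2 = 1" "det B2 = 1" "ch2 = chi A2 B2"
    using ch(2) unfolding charvar_def reps_def by auto
  have "trace_triple A1 B1 = trace_triple A2 B2" using ch(3) 1 2 Psi_chi by simp
  moreover have "ch1 w = ch2 w" if "trace_triple A1 B1 = trace_triple A2 B2" for w
    using chi_poly3_trace_triple[of w] 1 2 that by metis
  ultimately show "ch1 = ch2" by blast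
qed

lemma charvar_poly3_Psi: "\<forall>w. \<exists>P. poly3_fun P \<and> (\<forall>ch\<in>charvar m n. ch w = P (Psi ch))"
proof
  fix w
  obtain P where "poly3_fun P" "\<And>A B. det A = 1 \<Longrightarrow> det B = 1 \<Longrightarrow> chi A B w = P (trace_triple A B)"
    using chi_poly3_trace_triple[where w = w] by blast
  then show "\<exists>P. poly3_fun P \<and> (\<forall>ch\<in>charvar m n. ch w = P (Psi ch))"
    unfolding charvar_def reps_def by (auto simp: Psi_chi)
qed

section \<open>Chebyshev polynomials and the reducible curve\<close>

fun cheb :: "nat \<Rightarrow> complex poly" where
  "cheb 0 = [:2:]"
| "cheb (Suc 0) = [:0, 1:]"
| "cheb (Suc (Suc k)) = [:0, 1:] * cheb (Suc k) - cheb k"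

lemma poly_cheb_plus_inverse: "t \<noteq> 0 \<Longrightarrow> poly (cheb k) (t + inverse t) = t ^ k + inverse t ^ k"
  by (induction k rule: cheb.induct) (simp_all add: field_simps)

lemma ex_plus_inverse_eq: obtains t :: complex where "t \<noteq> 0" "t + inverse t = s"
proof -
  define t where "t = (s + csqrt (s\<^sup>2 - 4)) / 2"
  have "csqrt (s\<^sup>2 - 4) * csqrt (s\<^sup>2 - 4) = s\<^sup>2 - 4"
    by (metis power2_csqrt power2_eq_square)
  then have t: "t * (s - t) = 1"
    unfolding t_def by (simp add: field_simps power2_eq_square)
  then have "t \<noteq> 0" by auto
  moreover have "inverse t = s - t" using inverse_unique[OF t] .
  ultimately show ?thesis using that by simp
qed

lemma poly_cheb_mult:
  assumes "b \<le> a"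
  shows "poly (cheb a) s * poly (cheb b) s = poly (cheb (a + b)) s + poly (cheb (a - b)) s"
proof -
  obtain t where t: "t \<noteq> 0" "t + inverse t = s" using ex_plus_inverse_eq[where s = s] .
  have "t ^ a = t ^ (a - b) * t ^ b" "inverse t ^ a = inverse t ^ (a - b) * inverse t ^ b"
    using assms by (simp_all add: power_add[symmetric])
  moreover have "t ^ b * inverse t ^ b = 1" using t(1) by (simp add: power_mult_distrib[symmetric])
  ultimately show ?thesis
    unfolding t(2)[symmetric] poly_cheb_plus_inverse[OF t(1)] power_add
    by (simp add: algebra_simps) (metis mult.assoc mult.left_commute mult_1_right)
qed

text \<open>The Euclidean algorithm: C_{a-b} = C_a C_b - C_{a+b} reduces (a, b) to (a - b, b).\<close>
lemma cheb_coprime_recover: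
  assumes "coprime a b" "0 < a" "0 < b"
  obtains g where "poly3_fun g" "\<And>s. g (poly (cheb a) s, poly (cheb b) s, poly (cheb (a + b)) s) = s"
  using assms
proof (induction "a + b" arbitrary: a b thesis rule: less_induct)
  case less
  note poly3 = poly3_fun_compose poly3_fun_diff poly3_fun_mult poly3_fun_fst poly3_fun_fst_snd
    poly3_fun_snd_snd
  consider "a = b" | "b < a" | "a < b" by linarith
  then show ?case
  proof cases
    case 1
    then have "a = 1" using less.prems by (simp add: coprime_self)
    then show ?thesis using 1 by (intro less.prems(1)[of fst]) (simp_all add: poly3_fun_fst)
  next
    case 2
    have "coprime (a - b) b" using less.prems(2) 2 by (simp add: coprime_iff_gcd_eq_1 gcd_diff1_nat)
    then obtain g where g: "poly3_fun g"
      "\<And>s. g (poly (cheb (a - b)) s, poly (cheb b) s, poly (cheb (a - b + b)) s) = s"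
      using less.hyps[of "a - b" b] 2 less.prems(3,4) by auto
    have "poly (cheb (a - b)) s = poly (cheb a) s * poly (cheb b) s - poly (cheb (a + b)) s" for s
      using poly_cheb_mult[of b a s] 2 by simp
    then show ?thesis using g 2
      by (intro less.prems(1)[of "\<lambda>p. g (fst p * fst (snd p) - snd (snd p), fst (snd p), fst p)"])
         (auto intro!: poly3)
  next
    case 3
    have "coprime a (b - a)" using less.prems(2) 3
      by (metis coprime_commute coprime_iff_gcd_eq_1 gcd_diff1_nat less_imp_le_nat)
    then obtain g where g: "poly3_fun g"
      "\<And>s. g (poly (cheb a) s, poly (cheb (b - a)) s, poly (cheb (a + (b - a))) s) = s"
      using less.hyps[of a "b - a"] 3 less.prems(3,4) by auto
    have "poly (cheb (b - a)) s = poly (cheb a) s * poly (cheb b) s - poly (cheb (a + b)) s" for s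
      using poly_cheb_mult[of a b s] 3 by (simp add: mult.commute add.commute)
    then show ?thesis using g 3
      by (intro less.prems(1)[of "\<lambda>p. g (fst p, fst p * fst (snd p) - snd (snd p), fst (snd p))"])
         (auto intro!: poly3)
  qed
qed

lemma poly_pderiv_cheb:
  assumes "t \<noteq> 0"
  shows "poly (pderiv (cheb k)) (t + inverse t) * (t - inverse t) = of_nat k * (t ^ k - inverse t ^ k)"
proof (induction k rule: cheb.induct)
  case (3 k)
  let ?s = "t + inverse t" and ?w = "t - inverse t"
  have ti: "t * inverse t = 1" using assms by simp
  have "poly (pderiv (cheb (Suc (Suc k)))) ?s * ?w
     = poly (cheb (Suc k)) ?s * ?w + ?s * (poly (pderiv (cheb (Suc k))) ?s * ?w) - poly (pderiv (cheb k)) ?s * ?w"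
    by (simp add: pderiv_mult pderiv_diff pderiv_pCons algebra_simps)
  also have "\<dots> = (t * t ^ k + inverse t * inverse t ^ k) * ?w
      + ?s * ((of_nat k + 1) * (t * t ^ k - inverse t * inverse t ^ k)) - of_nat k * (t ^ k - inverse t ^ k)"
    using 3 assms by (simp add: poly_cheb_plus_inverse)
  also have "\<dots> = (of_nat k + 2) * (t * t * t ^ k - inverse t * inverse t * inverse t ^ k)"
  proof -
    have "(t * T + i * I) * (t - i) + (t + i) * ((K + 1) * (t * T - i * I)) - K * (T - I)
      = (K + 2) * (t * t * T - i * i * I)" if "t * i = 1" for i T I K :: complex
      using that by algebra
    from this[OF ti] show ?thesis .
  qed
  finally show ?case by (simp add: algebra_simps)
qed (simp_all add: pderiv_pCons)

definition power_trace :: "nat \<Rightarrow> complex \<Rightarrow> complex" where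
  "power_trace k t = t ^ k + inverse t ^ k"

text \<open>The trace triples of the reducible representations (diag(t^n, t^-n), diag(t^m, t^-m)).\<close>
definition red_curve :: "nat \<Rightarrow> nat \<Rightarrow> pt3 set" where
  "red_curve m n = {(power_trace n t, power_trace m t, power_trace (n + m) t) | t. t \<noteq> 0}"

definition red_param :: "nat \<Rightarrow> nat \<Rightarrow> pcurve" where
  "red_param m n = (cheb n, cheb m, cheb (n + m))"

lemma pc_eval_red_param:
  "t \<noteq> 0 \<Longrightarrow> pc_eval (red_param m n) (t + inverse t) = (power_trace n t, power_trace m t, power_trace (n + m) t)"
  by (simp add: red_param_def pc_eval_def poly_cheb_plus_inverse power_trace_def)

lemma red_curve_eq_range: "red_curve m n = range (pc_eval (red_param m n))"
proof
  show "red_curve m n \<subseteq> range (pc_eval (red_param m n))"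
    unfolding red_curve_def by (auto simp flip: pc_eval_red_param)
  show "range (pc_eval (red_param m n)) \<subseteq> red_curve m n"
  proof (rule image_subsetI)
    fix s :: complex
    obtain t where "t \<noteq> 0" "t + inverse t = s" using ex_plus_inverse_eq[where s = s] .
    then show "pc_eval (red_param m n) s \<in> red_curve m n"
      unfolding red_curve_def using pc_eval_red_param by blast
  qed
qed

lemma iso_to_line_red_param:
  assumes "coprime m n" "0 < m" "0 < n"
  shows "iso_to_line (red_param m n) (red_curve m n)"
proof -
  obtain g where g: "poly3_fun g" "\<And>s. g (pc_eval (red_param m n) s) = s"
    using cheb_coprime_recover[of n m] assms
    by (auto simp: red_param_def pc_eval_def coprime_commute)
  then have "inj (pc_eval (red_param m n))" by (metis injI)
  then show ?thesis unfolding iso_to_line_def red_curve_eq_range bij_betw_def using g by blast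
qed


section \<open>Eigenvectors of 2x2 matrices\<close>

definition eigpair :: "mat2 \<Rightarrow> complex \<Rightarrow> complex \<Rightarrow> complex \<Rightarrow> bool" where
  "eigpair X a v1 v2 \<longleftrightarrow> (v1 \<noteq> 0 \<or> v2 \<noteq> 0) \<and> X$1$1 * v1 + X$1$2 * v2 = a * v1 \<and> X$2$1 * v1 + X$2$2 * v2 = a * v2"

definition scalar_mat :: "mat2 \<Rightarrow> bool" where
  "scalar_mat X \<longleftrightarrow> X$1$2 = 0 \<and> X$2$1 = 0 \<and> X$1$1 = X$2$2"

lemma ex_quadratic_root: obtains a :: complex where "a\<^sup>2 - b * a + c = 0"
proof -
  define r where "r = csqrt (b\<^sup>2 - 4 * c)"
  have r: "r\<^sup>2 = b\<^sup>2 - 4 * c" unfolding r_def by simp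
  have "((b + r) / 2)\<^sup>2 - b * ((b + r) / 2) + c = 0"
    by (simp add: field_simps power2_eq_square r[unfolded power2_eq_square] algebra_simps)
  then show ?thesis by (rule that)
qed

lemma ex_eigpair: obtains a v1 v2 where "eigpair X a v1 v2"
proof -
  obtain a where a: "a\<^sup>2 - trace X * a + det X = 0" using ex_quadratic_root .
  define n11 where "n11 = X$1$1 - a"
  define n22 where "n22 = X$2$2 - a"
  have singular: "n11 * n22 - X$1$2 * X$2$1 = 0"
    using a unfolding n11_def n22_def trace_mat2 det_2 by (simp add: algebra_simps power2_eq_square)
  consider "n11 \<noteq> 0 \<or> X$1$2 \<noteq> 0" | "n11 = 0" "X$1$2 = 0" "n22 \<noteq> 0 \<or> X$2$1 \<noteq> 0"
    | "n11 = 0" "X$1$2 = 0" "n22 = 0" "X$2$1 = 0" by blast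
  then show ?thesis
  proof cases
    case 1
    then have "eigpair X a (X$1$2) (- n11)"
      unfolding eigpair_def using singular by (auto simp: n11_def n22_def algebra_simps)
    then show ?thesis by (rule that)
  next
    case 2
    then have "eigpair X a n22 (- X$2$1)"
      unfolding eigpair_def using singular by (auto simp: n11_def n22_def algebra_simps)
    then show ?thesis by (rule that)
  next
    case 3
    then have "eigpair X a 1 0" unfolding eigpair_def by (auto simp: n11_def n22_def)
    then show ?thesis by (rule that)
  qed
qed

lemma eigpair_charpoly:
  assumes "eigpair X a v1 v2" shows "a\<^sup>2 - trace X * a + det X = 0"
proof -
  define d where "d = (X$1$1 - a) * (X$2$2 - a) - X$1$2 * X$2$1"
  have "d * v1 = 0" "d * v2 = 0" using assms unfolding eigpair_def d_def by (auto; algebra)+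
  then have "d = 0" using assms unfolding eigpair_def by auto
  then show ?thesis unfolding d_def trace_mat2 det_2 by (simp add: algebra_simps power2_eq_square)
qed

lemma eigpair_det1:
  assumes "eigpair X a v1 v2" "det X = 1" shows "a \<noteq> 0" "trace X = a + inverse a"
proof -
  have c: "a\<^sup>2 - trace X * a + 1 = 0" using eigpair_charpoly[OF assms(1)] assms(2) by simp
  then show "a \<noteq> 0" by auto
  then show "trace X = a + inverse a" using c by (simp add: field_simps power2_eq_square)
qed

lemma eigpair_mult: "eigpair X a v1 v2 \<Longrightarrow> eigpair Y b v1 v2 \<Longrightarrow> eigpair (X ** Y) (a * b) v1 v2"
  unfolding eigpair_def mat2_mult_nth by (elim conjE, intro conjI; algebra)

lemma eigpair_mpow: "eigpair X a v1 v2 \<Longrightarrow> eigpair (mpow X k) (a ^ k) v1 v2"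
proof (induction k)
  case 0 then show ?case by (simp add: eigpair_def mat2_one_nth)
next
  case (Suc k) then show ?case using eigpair_mult[of X a v1 v2 "mpow X k" "a ^ k"] by simp
qed

lemma eigpair_unique: "eigpair X a v1 v2 \<Longrightarrow> eigpair X b v1 v2 \<Longrightarrow> a = b"
  unfolding eigpair_def by (metis mult_cancel_right)

lemma eigpair_scalar_mat: "scalar_mat X \<Longrightarrow> eigpair Y b v1 v2 \<Longrightarrow> eigpair X (X$1$1) v1 v2"
  unfolding scalar_mat_def eigpair_def by auto

lemma kernel_rank_one:
  fixes a b c d x y z w :: complex
  assumes "a * x + b * y = 0" "c * x + d * y = 0" "a * z + b * w = 0" "c * z + d * w = 0"
    "a \<noteq> 0 \<or> b \<noteq> 0 \<or> c \<noteq> 0 \<or> d \<noteq> 0"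
  shows "x * w = y * z"
proof -
  have "a * (x * w - y * z) = 0" "b * (x * w - y * z) = 0"
    "c * (x * w - y * z) = 0" "d * (x * w - y * z) = 0"
    using assms(1-4) by algebra+
  then show ?thesis using assms(5) by auto
qed

text \<open>A matrix commuting with a non-scalar M preserves the (one-dimensional) eigenspace of M.\<close>
lemma eigpair_commute:
  assumes "\<not> scalar_mat M" "eigpair M u v1 v2" "X ** M = M ** X"
  obtains a where "eigpair X a v1 v2"
proof -
  define w1 where "w1 = X$1$1 * v1 + X$1$2 * v2"
  define w2 where "w2 = X$2$1 * v1 + X$2$2 * v2"
  have c: "(X ** M)$i$j = (M ** X)$i$j" for i j using assms(3) by simp
  have e: "M$1$1 * v1 + M$1$2 * v2 = u * v1" "M$2$1 * v1 + M$2$2 * v2 = u * v2"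
    and nz: "v1 \<noteq> 0 \<or> v2 \<noteq> 0"
    using assms(2) unfolding eigpair_def by auto
  have Mw: "M$1$1 * w1 + M$1$2 * w2 = u * w1" "M$2$1 * w1 + M$2$2 * w2 = u * w2"
    using c[of 1 1] c[of 1 2] c[of 2 1] c[of 2 2] e
    unfolding w1_def w2_def mat2_mult_nth by algebra+
  have "v1 * w2 = v2 * w1"
    by (rule kernel_rank_one[where a = "M$1$1 - u" and b = "M$1$2" and c = "M$2$1" and d = "M$2$2 - u"])
       (use e Mw assms(1) in \<open>auto simp: scalar_mat_def algebra_simps\<close>)
  then have "eigpair X (if v1 = 0 then w2 / v2 else w1 / v1) v1 v2"
    using nz unfolding eigpair_def w1_def w2_def by (auto simp: field_simps)
  then show ?thesis by (rule that)
qed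

lemma mpow_commute: "A ** mpow A k = mpow A k ** A"
  by (induction k) (simp_all add: matrix_mul_assoc)

lemma ex_common_root_coprime:
  fixes a b :: complex
  assumes "coprime m n" "a \<noteq> 0" "b \<noteq> 0" "a ^ m = b ^ n"
  obtains t where "t \<noteq> 0" "t ^ n = a" "t ^ m = b"
proof -
  obtain u v :: int where uv: "u * int m + v * int n = 1"
    using bezout_int[of "int m" "int n"] assms(1)
    by (metis coprime_int_iff gcd_int_int_eq coprime_iff_gcd_eq_1)
  have pow: "(x powi k) ^ j = x powi (k * int j)" for x :: complex and k j
    by (metis power_int_mult power_int_of_nat)
  have pow': "(x ^ j) powi k = x powi (k * int j)" for x :: complex and k j
    by (metis pow power_int_mult power_int_of_nat mult.commute)
  define t where "t = a powi v * b powi u"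
  have "t ^ n = a powi (v * int n) * (b ^ n) powi u"
    unfolding t_def power_mult_distrib pow pow' ..
  also have "\<dots> = a powi (v * int n + u * int m)"
    using assms(2) by (simp flip: assms(4) add: pow' power_int_add)
  finally have "t ^ n = a" using uv by (simp add: algebra_simps)
  moreover have "t ^ m = (a ^ m) powi v * b powi (u * int m)"
    unfolding t_def power_mult_distrib pow pow' ..
  then have "t ^ m = b powi (v * int n + u * int m)"
    using assms(3) by (simp add: assms(4) pow' power_int_add)
  then have "t ^ m = b" using uv by (simp add: algebra_simps)
  moreover have "t \<noteq> 0" unfolding t_def using assms by simp
  ultimately show ?thesis using that by blast
qed

lemma trace_triple_common_eigpair:
  assumes "coprime m n" "(A, B) \<in> reps m n" "eigpair A a v1 v2" "eigpair B b v1 v2"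
  shows "trace_triple A B \<in> red_curve m n"
proof -
  have d: "det A = 1" "det B = 1" "mpow A m = mpow B n" using assms(2) unfolding reps_def by auto
  have a: "a \<noteq> 0" "trace A = a + inverse a" using eigpair_det1[OF assms(3) d(1)] by auto
  have b: "b \<noteq> 0" "trace B = b + inverse b" using eigpair_det1[OF assms(4) d(2)] by auto
  have "det (A ** B) = 1" using d by (simp add: det_mul)
  then have ab: "trace (A ** B) = a * b + inverse (a * b)"
    using eigpair_det1[OF eigpair_mult[OF assms(3,4)]] by auto
  have "eigpair (mpow A m) (a ^ m) v1 v2" by (rule eigpair_mpow[OF assms(3)])
  moreover have "eigpair (mpow A m) (b ^ n) v1 v2" unfolding d(3) by (rule eigpair_mpow[OF assms(4)])
  ultimately have "a ^ m = b ^ n" by (rule eigpair_unique)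
  then obtain t where t: "t \<noteq> 0" "t ^ n = a" "t ^ m = b"
    using ex_common_root_coprime[OF assms(1) a(1) b(1)] by blast
  have "trace_triple A B = (power_trace n t, power_trace m t, power_trace (n + m) t)"
    unfolding trace_triple_def power_trace_def a(2) b(2) ab using t
    by (auto simp: power_add power_inverse mult.commute)
  then show ?thesis unfolding red_curve_def using t(1) by blast
qed


section \<open>Representations with scalar A^m = B^n\<close>

text \<open>A^k = p I + q A for det A = 1, with (p, q) given by Cayley-Hamilton.\<close>
fun pow_coeffs :: "complex \<Rightarrow> nat \<Rightarrow> complex \<times> complex" where
  "pow_coeffs x 0 = (1, 0)"
| "pow_coeffs x (Suc k) = (- snd (pow_coeffs x k), fst (pow_coeffs x k) + x * snd (pow_coeffs x k))"

lemma mpow_comb4: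
  assumes "det A = 1"
  shows "mpow A k = comb4 (fst (pow_coeffs (trace A) k)) (snd (pow_coeffs (trace A) k)) 0 0 A B"
proof (induction k)
  case 0 then show ?case by (simp add: mat2_eq_iff comb4_nth mat2_one_nth)
next
  case (Suc k) then show ?case using mult_comb4_left[OF assms] by simp
qed

lemma snd_pow_coeffs_plus_inverse:
  assumes "a \<noteq> 0"
  shows "snd (pow_coeffs (a + inverse a) k) * (a - inverse a) = a ^ k - inverse a ^ k"
proof -
  let ?q = "\<lambda>k. snd (pow_coeffs (a + inverse a) k)"
  have ai: "a * inverse a = 1" using assms by simp
  have "?q k * (a - inverse a) = a ^ k - inverse a ^ k \<and>
    ?q (Suc k) * (a - inverse a) = a ^ Suc k - inverse a ^ Suc k"
  proof (induction k)
    case (Suc k)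
    have "?q (Suc (Suc k)) * (a - inverse a)
        = (a + inverse a) * (?q (Suc k) * (a - inverse a)) - ?q k * (a - inverse a)"
      by (simp add: algebra_simps)
    also have "\<dots> = (a + inverse a) * (a ^ Suc k - inverse a ^ Suc k) - (a ^ k - inverse a ^ k)"
      using Suc by simp
    also have "\<dots> = a ^ Suc (Suc k) - inverse a ^ Suc (Suc k)
        + (a * inverse a) * a ^ k - (a * inverse a) * inverse a ^ k - (a ^ k - inverse a ^ k)"
      by (simp add: algebra_simps)
    also have "\<dots> = a ^ Suc (Suc k) - inverse a ^ Suc (Suc k)" using ai by simp
    finally show ?case using Suc by simp
  qed simp
  then show ?thesis ..
qed

lemma snd_pow_coeffs_double:
  assumes "a * a = 1"
  shows "snd (pow_coeffs (2 * a) k) * a = of_nat k * a ^ k"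
proof -
  let ?q = "\<lambda>k. snd (pow_coeffs (2 * a) k)"
  have "?q k * a = of_nat k * a ^ k \<and> ?q (Suc k) * a = of_nat (Suc k) * a ^ Suc k"
  proof (induction k)
    case (Suc k)
    have "?q (Suc (Suc k)) * a = 2 * a * (?q (Suc k) * a) - ?q k * a"
      by (simp add: algebra_simps)
    also have "\<dots> = 2 * a * (of_nat (Suc k) * a ^ Suc k) - of_nat k * a ^ k" using Suc by simp
    also have "\<dots> = 2 * of_nat (Suc k) * a ^ Suc (Suc k) - of_nat k * ((a * a) * a ^ k)"
      using assms by (simp add: algebra_simps)
    also have "\<dots> = of_nat (Suc (Suc k)) * a ^ Suc (Suc k)"
      using assms by (simp add: algebra_simps)
    finally show ?case using Suc by simp
  qed (use assms in simp)
  then show ?thesis ..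
qed

definition zeta :: "nat \<Rightarrow> nat \<Rightarrow> complex" where
  "zeta k m = exp (pi * \<i> * of_nat k / of_nat m)"

definition zeta_trace :: "nat \<Rightarrow> nat \<Rightarrow> complex" where
  "zeta_trace k m = zeta k m + inverse (zeta k m)"

lemma zeta_cis: "zeta k m = cis (pi * real k / real m)"
  unfolding zeta_def cis_conv_exp by (simp add: field_simps)

lemma zeta_nonzero: "zeta k m \<noteq> 0"
  by (simp add: zeta_def)

lemma cis_pi_div_power: "0 < m \<Longrightarrow> cis (pi * real j / real m) ^ m = (-1) ^ j"
proof -
  assume "0 < m"
  have "cis (pi * real j / real m) ^ m = cis (real m * (pi * real j / real m))" by (rule Complex.DeMoivre)
  also have "\<dots> = cis (real j * pi)" using \<open>0 < m\<close> by (simp add: mult.commute)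
  also have "\<dots> = cis pi ^ j" by (rule Complex.DeMoivre[symmetric])
  finally show ?thesis by simp
qed

lemma zeta_power: "0 < m \<Longrightarrow> zeta k m ^ m = (-1) ^ k"
  unfolding zeta_cis by (rule cis_pi_div_power)

lemma neg_one_power_eq_iff: "((-1::complex) ^ k = (-1) ^ j) \<longleftrightarrow> k mod 2 = j mod 2"
  by (cases "even k"; cases "even j") (simp_all add: even_iff_mod_2_eq_zero odd_iff_mod_2_eq_one)

lemma zeta_trace_cos: "zeta_trace k m = of_real (2 * cos (pi * real k / real m))"
  unfolding zeta_trace_def zeta_cis by (simp add: cis_inverse cos_of_real complex_eq_iff)

lemma zeta_trace_inj:
  assumes "0 < m" "k \<le> m" "j \<le> m" "zeta_trace k m = zeta_trace j m" shows "k = j"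
proof -
  have "cos (pi * real k / real m) = cos (pi * real j / real m)" using assms(4) unfolding zeta_trace_cos by simp
  moreover have "0 \<le> pi * real k / real m" "pi * real k / real m \<le> pi"
    "0 \<le> pi * real j / real m" "pi * real j / real m \<le> pi"
    using assms(1-3) by (auto simp: field_simps)
  ultimately have "pi * real k / real m = pi * real j / real m" using cos_inj_pi by blast
  then show ?thesis using assms(1) by simp
qed

lemma zeta_minus_inverse_nonzero:
  assumes "0 < k" "k < m" shows "zeta k m - inverse (zeta k m) \<noteq> 0"
proof
  assume "zeta k m - inverse (zeta k m) = 0"
  then have "zeta k m * zeta k m = 1" using zeta_nonzero[of k m] by (simp add: field_simps)
  moreover have "zeta k m * zeta k m = cis (2 * pi * real k / real m)"
    unfolding zeta_cis cis_mult by (simp add: field_simps)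
  ultimately have "cis (2 * pi * real k / real m) = cis (2 * pi * real 0 / real m)" by simp
  moreover have "inj_on (\<lambda>k. cis (2 * pi * real k / real m)) {..<m}"
    using Complex.bij_betw_roots_unity[of m] assms unfolding bij_betw_def by simp
  ultimately show False using assms unfolding inj_on_def by (metis lessThan_iff less_trans not_less_zero)
qed

lemma root_of_unity_trace:
  assumes "a ^ (2 * m) = 1" "a * a \<noteq> 1" "0 < m"
  obtains k where "0 < k" "k < m" "a + inverse a = zeta_trace k m" "a ^ m = (-1) ^ k"
proof -
  have "a \<in> {z. z ^ (2 * m) = 1}" using assms by simp
  also have "{z. z ^ (2 * m) = 1} = (\<lambda>k. cis (2 * pi * real k / real (2 * m))) ` {..<2 * m}"
    using bij_betw_imp_surj_on[OF Complex.bij_betw_roots_unity[of "2 * m"]] assms(3) by simp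
  finally obtain j where j: "j < 2 * m" "a = cis (pi * real j / real m)" by auto
  have am: "a ^ m = (-1) ^ j" unfolding j(2) using assms(3) by (rule cis_pi_div_power)
  have ainv: "inverse a = cis (- (pi * real j / real m))" using j(2) by (simp add: cis_inverse)
  have "j \<noteq> 0" using j(2) assms(2) by (metis cis_zero mult_1 of_nat_0 mult_zero_right div_0)
  moreover have "j \<noteq> m" using j(2) assms(2,3) by (auto simp: cis_conv_exp)
  ultimately consider "0 < j" "j < m" | "m < j" "j < 2 * m" using j(1) by linarith
  then show ?thesis
  proof cases
    case 1
    have "a + inverse a = zeta_trace j m" unfolding zeta_trace_def zeta_cis j(2) ..
    then show ?thesis by (rule that[OF 1 _ am])
  next
    case 2
    define k where "k = 2 * m - j"
    have k: "0 < k" "k < m" using 2 unfolding k_def by auto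
    have r: "pi * real k / real m = 2 * pi + (- (pi * real j / real m))"
      unfolding k_def using 2 assms(3) by (simp add: of_nat_diff field_simps)
    have "zeta k m = cis (2 * pi) * cis (- (pi * real j / real m))" unfolding zeta_cis r cis_mult ..
    then have "zeta k m = inverse a" unfolding ainv by simp
    then have "a + inverse a = zeta_trace k m" unfolding zeta_trace_def by (simp add: add.commute)
    moreover have "even k \<longleftrightarrow> even j" using 2 unfolding k_def by presburger
    then have "(-1::complex) ^ j = (-1) ^ k" by (cases "even j") simp_all
    ultimately show ?thesis using am by (intro that[OF k]) simp_all
  qed
qed

lemma trace_scalar_mpow:
  assumes "det A = 1" "\<not> scalar_mat A" "0 < m" "scalar_mat (mpow A m)"
  obtains k where "0 < k" "k < m" "trace A = zeta_trace k m" "mpow A m $1$1 = (-1) ^ k"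
proof -
  obtain a v1 v2 where e: "eigpair A a v1 v2" using ex_eigpair .
  have a0: "a \<noteq> 0" and ta: "trace A = a + inverse a" using eigpair_det1[OF e assms(1)] by auto
  define q where "q = snd (pow_coeffs (trace A) m)"
  have M: "mpow A m = comb4 (fst (pow_coeffs (trace A) m)) q 0 0 A A"
    unfolding q_def by (rule mpow_comb4[OF assms(1)])
  have q0: "q = 0"
  proof (rule ccontr)
    assume "q \<noteq> 0"
    then show False
      using assms(2,4) unfolding scalar_mat_def M comb4_nth mat2_one_nth by (auto simp: algebra_simps)
  qed
  have "eigpair (mpow A m) (mpow A m $1$1) v1 v2" by (rule eigpair_scalar_mat[OF assms(4) e])
  then have am: "mpow A m $1$1 = a ^ m" using eigpair_unique eigpair_mpow[OF e] by blast
  have aa: "a * a \<noteq> 1"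
  proof
    assume aa: "a * a = 1"
    then have "inverse a = a" using a0 by (metis inverse_unique)
    then have "trace A = 2 * a" using ta by simp
    then have "q * a = of_nat m * a ^ m" using snd_pow_coeffs_double[OF aa] unfolding q_def by simp
    then show False using q0 a0 assms(3) by simp
  qed
  have "q * (a - inverse a) = a ^ m - inverse a ^ m"
    using snd_pow_coeffs_plus_inverse[OF a0] unfolding q_def ta .
  then have "a ^ m * a ^ m = 1" using q0 a0 by (simp add: power_inverse[symmetric] field_simps)
  then have "a ^ (2 * m) = 1" by (simp add: mult_2 power_add)
  then obtain k where "0 < k" "k < m" "a + inverse a = zeta_trace k m" "a ^ m = (-1) ^ k"
    using root_of_unity_trace aa assms(3) by blast
  with ta am show ?thesis by (intro that) simp_all
qed

definition vline :: "complex \<Rightarrow> complex \<Rightarrow> pt3 set" where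
  "vline a b = {(a, b, z) | z. True}"

definition irr_line :: "nat \<Rightarrow> nat \<Rightarrow> nat \<times> nat \<Rightarrow> pt3 set" where
  "irr_line m n kk = vline (zeta_trace (fst kk) m) (zeta_trace (snd kk) n)"

lemma trace_triple_reps:
  assumes "coprime m n" "0 < m" "0 < n" "(A, B) \<in> reps m n"
  shows "trace_triple A B \<in> red_curve m n \<union> (\<Union>kk\<in>irr_index m n. irr_line m n kk)"
proof -
  have d: "det A = 1" "det B = 1" "mpow A m = mpow B n" using assms(4) unfolding reps_def by auto
  consider "\<not> scalar_mat (mpow A m)" | "scalar_mat A" | "scalar_mat B"
    | "scalar_mat (mpow A m)" "\<not> scalar_mat A" "\<not> scalar_mat B" by blast
  then show ?thesis
  proof cases
    case 1
    obtain u v1 v2 where e: "eigpair (mpow A m) u v1 v2" using ex_eigpair .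
    obtain a where a: "eigpair A a v1 v2" using eigpair_commute[OF 1 e mpow_commute] .
    have "B ** mpow A m = mpow A m ** B" unfolding d(3) by (rule mpow_commute)
    then obtain b where b: "eigpair B b v1 v2" using eigpair_commute[OF 1 e] by blast
    show ?thesis using trace_triple_common_eigpair[OF assms(1,4) a b] by blast
  next
    case 2
    obtain b v1 v2 where b: "eigpair B b v1 v2" using ex_eigpair .
    have "eigpair A (A$1$1) v1 v2" by (rule eigpair_scalar_mat[OF 2 b])
    then show ?thesis using trace_triple_common_eigpair[OF assms(1,4) _ b] by blast
  next
    case 3
    obtain a v1 v2 where a: "eigpair A a v1 v2" using ex_eigpair .
    have "eigpair B (B$1$1) v1 v2" by (rule eigpair_scalar_mat[OF 3 a])
    then show ?thesis using trace_triple_common_eigpair[OF assms(1,4) a] by blast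
  next
    case 4
    obtain k where k: "0 < k" "k < m" "trace A = zeta_trace k m" "mpow A m $1$1 = (-1) ^ k"
      using trace_scalar_mpow[OF d(1) 4(2) assms(2) 4(1)] .
    have "scalar_mat (mpow B n)" using 4(1) d(3) by simp
    then obtain k' where k': "0 < k'" "k' < n" "trace B = zeta_trace k' n" "mpow B n $1$1 = (-1) ^ k'"
      using trace_scalar_mpow[OF d(2) 4(3) assms(3)] by blast
    have "(-1::complex) ^ k = (-1) ^ k'" using k(4) k'(4) d(3) by simp
    then have "(k, k') \<in> irr_index m n"
      using k k' unfolding irr_index_def neg_one_power_eq_iff by simp
    moreover have "trace_triple A B \<in> irr_line m n (k, k')"
      unfolding irr_line_def vline_def trace_triple_def using k(3) k'(3) by simp
    ultimately show ?thesis by blast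
  qed
qed


section \<open>The image of the character variety\<close>

lemma diagm_nth: "diagm l $1$1 = l" "diagm l $2$2 = inverse l" "diagm l $1$2 = 0" "diagm l $2$1 = 0"
  by (simp_all add: diagm_def)

lemma Pmat_nth: "Pmat r $1$1 = 1" "Pmat r $1$2 = r - 1" "Pmat r $2$1 = 1" "Pmat r $2$2 = r"
  by (simp_all add: Pmat_def)

definition Pinv :: "complex \<Rightarrow> mat2" where
  "Pinv r = (\<chi> i j. if i = 1 then (if j = 1 then r else 1 - r) else (if j = 1 then -1 else 1))"

lemma Pinv_nth: "Pinv r $1$1 = r" "Pinv r $1$2 = 1 - r" "Pinv r $2$1 = -1" "Pinv r $2$2 = 1"
  by (simp_all add: Pinv_def)

lemma Pinv_Pmat: "Pinv r ** Pmat r = mat 1" "Pmat r ** Pinv r = mat 1"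
  by (auto simp: mat2_eq_iff mat2_mult_nth Pmat_nth Pinv_nth mat2_one_nth algebra_simps)

lemma matrix_inv_Pmat: "matrix_inv (Pmat r) = Pinv r"
  by (rule matrix_inv_eqI) (simp_all add: Pinv_Pmat)

lemma det_diagm: "l \<noteq> 0 \<Longrightarrow> det (diagm l) = 1"
  by (simp add: det_2 diagm_nth)

lemma mpow_diagm: "mpow (diagm l) k = diagm (l ^ k)"
  by (induction k) (simp_all add: mat2_eq_iff mat2_mult_nth diagm_nth mat2_one_nth power_inverse)

lemma mpow_conj:
  assumes "Q ** P = mat 1" "P ** Q = mat 1" shows "mpow (P ** D ** Q) k = P ** mpow D k ** Q"
proof (induction k)
  case 0
  show ?case using assms(2) by simp
next
  case (Suc k)
  have "mpow (P ** D ** Q) (Suc k) = P ** D ** (Q ** P) ** mpow D k ** Q"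
    using Suc by (simp add: matrix_mul_assoc)
  then show ?case using assms by (simp add: matrix_mul_assoc)
qed

lemma conj_diagm_scalar:
  assumes "c * c = 1" "P ** Q = mat 1" shows "P ** diagm c ** Q = diagm c"
proof -
  have "inverse c = c" using assms(1) by (metis inverse_unique)
  then have "P ** diagm c = diagm c ** P" by (simp add: mat2_eq_iff mat2_mult_nth diagm_nth mult.commute)
  then show ?thesis using assms(2) by (metis matrix_mul_assoc matrix_mul_rid)
qed

lemma trace_triple_diagm:
  "trace_triple (diagm a) (diagm b) = (a + inverse a, b + inverse b, a * b + inverse (a * b))"
  by (simp add: trace_triple_def trace_mat2 mat2_mult_nth diagm_nth)

lemma trace_triple_irr:
  "trace_triple (diagm l) (Pmat r ** diagm u ** Pinv r) =
    (l + inverse l, u + inverse u, r * (l - inverse l) * (u - inverse u) + l * inverse u + inverse l * u)"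
  by (simp add: trace_triple_def trace_mat2 mat2_mult_nth diagm_nth Pmat_nth Pinv_nth algebra_simps)

lemma image_setcompr: "f ` {g t | t. P t} = {f (g t) | t. P t}"
  by blast

lemma Psi_Xred: "Psi ` Xred m n = red_curve m n"
proof -
  have "Psi ` Xred m n = {trace_triple (diagm (t ^ n)) (diagm (t ^ m)) | t. t \<noteq> 0}"
    unfolding Xred_def image_setcompr Psi_chi ..
  also have "\<dots> = red_curve m n"
    unfolding red_curve_def trace_triple_diagm power_trace_def
    by (simp add: power_inverse power_add mult.commute)
  finally show ?thesis .
qed

lemma Xred_subset_charvar: "Xred m n \<subseteq> charvar m n"
proof
  fix ch assume "ch \<in> Xred m n"
  then obtain t where t: "t \<noteq> 0" "ch = chi (diagm (t ^ n)) (diagm (t ^ m))" unfolding Xred_def by blast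
  have "(diagm (t ^ n), diagm (t ^ m)) \<in> reps m n"
    unfolding reps_def using t(1) by (simp add: det_diagm mpow_diagm power_mult[symmetric] mult.commute)
  then show "ch \<in> charvar m n" unfolding charvar_def using t(2) by force
qed

lemma Xirr_line_zeta:
  "Xirr_line m n k k' = {chi (diagm (zeta k m)) (Pmat r ** diagm (zeta k' n) ** Pinv r) | r. True}"
  unfolding Xirr_line_def zeta_def matrix_inv_Pmat ..

lemma Psi_Xirr_line:
  assumes "(k, k') \<in> irr_index m n"
  shows "Psi ` Xirr_line m n k k' = irr_line m n (k, k')"
proof -
  define l where "l = zeta k m"
  define u where "u = zeta k' n"
  have nz: "(l - inverse l) * (u - inverse u) \<noteq> 0"
    unfolding l_def u_def using zeta_minus_inverse_nonzero assms unfolding irr_index_def by simp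
  have "Psi ` Xirr_line m n k k' = {(l + inverse l, u + inverse u,
      r * (l - inverse l) * (u - inverse u) + l * inverse u + inverse l * u) | r. True}"
    unfolding Xirr_line_zeta image_setcompr Psi_chi trace_triple_irr l_def u_def ..
  also have "\<dots> = irr_line m n (k, k')"
  proof (intro set_eqI iffI)
    fix p assume "p \<in> irr_line m n (k, k')"
    then obtain z where p: "p = (l + inverse l, u + inverse u, z)"
      unfolding irr_line_def vline_def zeta_trace_def l_def u_def by auto
    define r where "r = (z - l * inverse u - inverse l * u) / ((l - inverse l) * (u - inverse u))"
    have "r * (l - inverse l) * (u - inverse u) + l * inverse u + inverse l * u = z"
      unfolding r_def using nz by (simp add: field_simps)
    then show "p \<in> {(l + inverse l, u + inverse u,
        r * (l - inverse l) * (u - inverse u) + l * inverse u + inverse l * u) | r. True}"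
      unfolding p by blast
  qed (auto simp: irr_line_def vline_def zeta_trace_def l_def u_def)
  finally show ?thesis .
qed

lemma Xirr_line_subset_charvar:
  assumes "(k, k') \<in> irr_index m n"
  shows "Xirr_line m n k k' \<subseteq> charvar m n"
proof
  have k: "0 < m" "0 < n" "(-1::complex) ^ k = (-1) ^ k'"
    using assms unfolding irr_index_def neg_one_power_eq_iff by auto
  have sq: "(-1::complex) ^ k' * (-1) ^ k' = 1" by (simp flip: power_add power_mult_distrib)
  fix ch assume "ch \<in> Xirr_line m n k k'"
  then obtain r where ch: "ch = chi (diagm (zeta k m)) (Pmat r ** diagm (zeta k' n) ** Pinv r)"
    unfolding Xirr_line_zeta by blast
  have "mpow (diagm (zeta k m)) m = diagm ((-1) ^ k')"
    unfolding mpow_diagm zeta_power[OF k(1)] k(3) ..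
  moreover have "mpow (Pmat r ** diagm (zeta k' n) ** Pinv r) n = diagm ((-1) ^ k')"
    unfolding mpow_conj[OF Pinv_Pmat] mpow_diagm zeta_power[OF k(2)]
    by (rule conj_diagm_scalar[OF sq Pinv_Pmat(2)])
  moreover have "det (Pmat r ** diagm (zeta k' n) ** Pinv r) = 1"
    unfolding det_mul by (simp add: det_2 Pmat_nth Pinv_nth diagm_nth zeta_nonzero)
  ultimately have "(diagm (zeta k m), Pmat r ** diagm (zeta k' n) ** Pinv r) \<in> reps m n"
    unfolding reps_def by (simp add: det_diagm zeta_nonzero)
  then show "ch \<in> charvar m n" unfolding charvar_def ch by force
qed

lemma Psi_charvar:
  assumes "coprime m n" "0 < m" "0 < n"
  shows "Psi ` charvar m n = red_curve m n \<union> (\<Union>kk\<in>irr_index m n. irr_line m n kk)"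
proof (intro set_eqI iffI)
  fix p assume "p \<in> Psi ` charvar m n"
  then obtain A B where "(A, B) \<in> reps m n" "p = Psi (chi A B)" unfolding charvar_def by auto
  then show "p \<in> red_curve m n \<union> (\<Union>kk\<in>irr_index m n. irr_line m n kk)"
    using trace_triple_reps[OF assms] by (simp add: Psi_chi)
next
  fix p assume "p \<in> red_curve m n \<union> (\<Union>kk\<in>irr_index m n. irr_line m n kk)"
  then consider "p \<in> Psi ` Xred m n" | k k' where "(k, k') \<in> irr_index m n" "p \<in> Psi ` Xirr_line m n k k'"
    using Psi_Xred Psi_Xirr_line by fastforce
  then show "p \<in> Psi ` charvar m n"
    using Xred_subset_charvar Xirr_line_subset_charvar by cases blast+
qed


section \<open>How the lines meet the reducible curve\<close>

definition vline_param :: "complex \<Rightarrow> complex \<Rightarrow> pcurve" where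
  "vline_param a b = ([:a:], [:b:], [:0, 1:])"

lemma iso_to_line_vline_param: "iso_to_line (vline_param a b) (vline a b)"
  unfolding iso_to_line_def bij_betw_def
proof (intro conjI exI[of _ "\<lambda>p. snd (snd p)"] poly3_fun_snd_snd allI)
  show "inj (pc_eval (vline_param a b))" by (rule injI) (simp add: pc_eval_def vline_param_def)
  show "range (pc_eval (vline_param a b)) = vline a b" by (auto simp: pc_eval_def vline_param_def vline_def)
qed (simp add: pc_eval_def vline_param_def)

lemma infinite_vline: "infinite (vline a b)"
proof -
  have "vline a b = range (\<lambda>z. (a, b, z))" unfolding vline_def by auto
  moreover have "inj (\<lambda>z::complex. (a, b, z))" by (rule injI) simp
  ultimately show ?thesis using infinite_UNIV_char_0 finite_imageD by metis
qed

lemma irr_line_disjoint: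
  assumes "a \<in> irr_index m n" "b \<in> irr_index m n" "a \<noteq> b"
  shows "irr_line m n a \<inter> irr_line m n b = {}"
proof (rule ccontr)
  assume "irr_line m n a \<inter> irr_line m n b \<noteq> {}"
  then have "zeta_trace (fst a) m = zeta_trace (fst b) m" "zeta_trace (snd a) n = zeta_trace (snd b) n"
    unfolding irr_line_def vline_def by auto
  then have "fst a = fst b" "snd a = snd b"
    using zeta_trace_inj[of m "fst a" "fst b"] zeta_trace_inj[of n "snd a" "snd b"] assms(1,2)
    unfolding irr_index_def by (auto simp: case_prod_beta)
  then show False using assms(3) by (simp add: prod_eq_iff)
qed

lemma irr_line_inj_on: "inj_on (irr_line m n) (irr_index m n)"
  using irr_line_disjoint infinite_vline unfolding irr_line_def
  by (intro inj_onI) (metis finite.emptyI inf.idem)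

lemma red_curve_not_subset_irr_line:
  assumes "kk \<in> irr_index m n" shows "\<not> red_curve m n \<subseteq> irr_line m n kk"
proof
  assume "red_curve m n \<subseteq> irr_line m n kk"
  moreover have "(2, 2, 2) \<in> red_curve m n"
    unfolding red_curve_def power_trace_def by (intro CollectI exI[of _ 1]) simp
  ultimately have "zeta_trace (fst kk) m = zeta_trace 0 m"
    unfolding irr_line_def vline_def by (auto simp: zeta_trace_def zeta_def)
  then show False using zeta_trace_inj[of m "fst kk" 0] assms unfolding irr_index_def by auto
qed

lemma plus_inverse_eq_cases:
  fixes a l :: complex
  assumes "a \<noteq> 0" "l \<noteq> 0" "a + inverse a = l + inverse l"
  shows "a = l \<or> a = inverse l"
proof -
  have "(a - l) * (a - inverse l) = a * (a + inverse a - (l + inverse l))"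
    using assms(1,2) by (simp add: field_simps)
  then show ?thesis using assms(3) by simp
qed

lemma power_trace_triple:
  assumes "t \<noteq> 0" "t ^ n = a" "t ^ m = b"
  shows "(power_trace n t, power_trace m t, power_trace (n + m) t)
    = (a + inverse a, b + inverse b, a * b + inverse (a * b))"
  using assms by (simp add: power_trace_def power_add power_inverse)

text \<open>The two intersection points come from t^n = zeta k m and t^m = (zeta k' n)^(\<plusminus>1),
  solvable since the parities of k and k' agree.\<close>
lemma irr_line_Int_red_curve:
  assumes "coprime m n" "(k, k') \<in> irr_index m n"
  obtains t1 t2 where "t1 \<noteq> 0" "t1 ^ n = zeta k m" "t1 ^ m = zeta k' n"
    "t2 \<noteq> 0" "t2 ^ n = zeta k m" "t2 ^ m = inverse (zeta k' n)"
    "irr_line m n (k, k') \<inter> red_curve m n =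
      {pc_eval (red_param m n) (t1 + inverse t1), pc_eval (red_param m n) (t2 + inverse t2)}"
proof -
  define l where "l = zeta k m"
  define u where "u = zeta k' n"
  have l0: "l \<noteq> 0" and u0: "u \<noteq> 0" unfolding l_def u_def by (simp_all add: zeta_nonzero)
  have "0 < m" "0 < n" "(-1::complex) ^ k = (-1) ^ k'"
    using assms(2) unfolding irr_index_def neg_one_power_eq_iff by auto
  then have lu: "l ^ m = u ^ n" and un: "u ^ n = (-1) ^ k'"
    unfolding l_def u_def by (simp_all add: zeta_power)
  have lu': "l ^ m = inverse u ^ n" unfolding lu power_inverse un by (cases "even k'") simp_all
  obtain t1 where t1: "t1 \<noteq> 0" "t1 ^ n = l" "t1 ^ m = u"
    using ex_common_root_coprime[OF assms(1) l0 u0 lu] .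
  have "inverse u \<noteq> 0" using u0 by simp
  then obtain t2 where t2: "t2 \<noteq> 0" "t2 ^ n = l" "t2 ^ m = inverse u"
    using ex_common_root_coprime[OF assms(1) l0 _ lu'] by blast
  define P where "P t = (power_trace n t, power_trace m t, power_trace (n + m) t)" for t
  have P1: "P t1 = (l + inverse l, u + inverse u, l * u + inverse (l * u))"
    unfolding P_def by (rule power_trace_triple[OF t1])
  have P2: "P t2 = (l + inverse l, u + inverse u, l * inverse u + inverse (l * inverse u))"
    unfolding P_def using power_trace_triple[OF t2] by (simp add: add.commute)
  have line: "irr_line m n (k, k') = vline (l + inverse l) (u + inverse u)"
    unfolding irr_line_def zeta_trace_def l_def u_def by simp
  have "irr_line m n (k, k') \<inter> red_curve m n = {P t1, P t2}"
  proof (intro set_eqI iffI)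
    fix p assume p: "p \<in> irr_line m n (k, k') \<inter> red_curve m n"
    then obtain t where t: "t \<noteq> 0" "p = P t" unfolding red_curve_def P_def by blast
    have Pt: "P t = (t ^ n + inverse (t ^ n), t ^ m + inverse (t ^ m), t ^ n * t ^ m + inverse (t ^ n * t ^ m))"
      unfolding P_def by (rule power_trace_triple[OF t(1) refl refl])
    have "t ^ n + inverse (t ^ n) = l + inverse l" "t ^ m + inverse (t ^ m) = u + inverse u"
      using p t(2) unfolding line vline_def Pt by auto
    then have "t ^ n = l \<or> t ^ n = inverse l" "t ^ m = u \<or> t ^ m = inverse u"
      using plus_inverse_eq_cases l0 u0 t(1) by simp_all
    then have "P t = P t1 \<or> P t = P t2"
      unfolding P1 P2 Pt by (auto simp: inverse_mult_distrib ac_simps)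
    then show "p \<in> {P t1, P t2}" using t(2) by blast
  next
    have "P t1 \<in> red_curve m n" "P t2 \<in> red_curve m n"
      unfolding red_curve_def P_def using t1(1) t2(1) by blast+
    moreover have "P t1 \<in> irr_line m n (k, k')" "P t2 \<in> irr_line m n (k, k')"
      unfolding line vline_def P1 P2 by auto
    moreover fix p assume "p \<in> {P t1, P t2}"
    ultimately show "p \<in> irr_line m n (k, k') \<inter> red_curve m n" by blast
  qed
  then show ?thesis
    using that[OF t1[unfolded l_def u_def] t2[unfolded l_def u_def]] t1(1) t2(1)
    by (simp add: P_def pc_eval_red_param)
qed

lemma card_irr_line_Int_red_curve:
  assumes "coprime m n" "kk \<in> irr_index m n"
  shows "card (irr_line m n kk \<inter> red_curve m n) = 2"
proof -
  obtain k k' where kk: "kk = (k, k')" by (cases kk)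
  obtain t1 t2 where t1: "t1 \<noteq> 0" "t1 ^ n = zeta k m" "t1 ^ m = zeta k' n"
    and t2: "t2 \<noteq> 0" "t2 ^ n = zeta k m" "t2 ^ m = inverse (zeta k' n)"
    and Int: "irr_line m n (k, k') \<inter> red_curve m n =
      {pc_eval (red_param m n) (t1 + inverse t1), pc_eval (red_param m n) (t2 + inverse t2)}"
    using irr_line_Int_red_curve[OF assms(1) assms(2)[unfolded kk]] by blast
  define l where "l = zeta k m"
  define u where "u = zeta k' n"
  have "(l - inverse l) * (u - inverse u) \<noteq> 0"
    using assms(2) zeta_minus_inverse_nonzero unfolding kk irr_index_def l_def u_def by simp
  moreover have "(l * u + inverse (l * u)) - (l * inverse u + inverse (l * inverse u))
      = (l - inverse l) * (u - inverse u)"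
    using zeta_nonzero[of k m] zeta_nonzero[of k' n] unfolding l_def u_def by (simp add: field_simps)
  ultimately have "pc_eval (red_param m n) (t1 + inverse t1) \<noteq> pc_eval (red_param m n) (t2 + inverse t2)"
    using power_trace_triple[OF t1] power_trace_triple[OF t2]
    unfolding pc_eval_red_param[OF t1(1)] pc_eval_red_param[OF t2(1)] l_def u_def by auto
  then show ?thesis unfolding kk Int by simp
qed

text \<open>At a common point t^n = zeta k m, so C_n'(s) (t - 1/t) = n (t^n - t^-n) \<noteq> 0 and the tangent
  of the reducible curve is not vertical.\<close>
lemma transversal_irr_line_red_curve:
  assumes "coprime m n" "0 < m" "0 < n" "kk \<in> irr_index m n" "p \<in> irr_line m n kk \<inter> red_curve m n"
  shows "transversal_at (irr_line m n kk) (red_curve m n) p"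
proof -
  obtain k k' where kk: "kk = (k, k')" by (cases kk)
  then have k: "0 < k" "k < m" using assms(4) unfolding irr_index_def by auto
  obtain t where t: "t \<noteq> 0" "t ^ n = zeta k m" "p = pc_eval (red_param m n) (t + inverse t)"
    using irr_line_Int_red_curve[OF assms(1) assms(4)[unfolded kk]] assms(5) unfolding kk by blast
  obtain z where z: "p = (zeta_trace k m, zeta_trace k' n, z)"
    using assms(5) unfolding kk irr_line_def vline_def by auto
  have "poly (pderiv (cheb n)) (t + inverse t) \<noteq> 0"
  proof
    assume "poly (pderiv (cheb n)) (t + inverse t) = 0"
    then have "of_nat n * (t ^ n - inverse t ^ n) = 0" using poly_pderiv_cheb[OF t(1), of n] by simp
    then have "zeta k m - inverse (zeta k m) = 0" using assms(3) t(2) by (simp add: power_inverse)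
    then show False using zeta_minus_inverse_nonzero k by simp
  qed
  then have "lin_indep2 (pc_deriv (vline_param (zeta_trace k m) (zeta_trace k' n)) z)
      (pc_deriv (red_param m n) (t + inverse t))"
    unfolding lin_indep2_def by (auto simp: pc_deriv_def vline_param_def red_param_def pderiv_pCons)
  moreover have "pc_eval (vline_param (zeta_trace k m) (zeta_trace k' n)) z = p"
    unfolding z by (simp add: pc_eval_def vline_param_def)
  ultimately show ?thesis
    unfolding transversal_at_def kk irr_line_def fst_conv snd_conv
    using iso_to_line_vline_param iso_to_line_red_param[OF assms(1-3)] t(3) by metis
qed


section \<open>Counting and the components\<close>

lemma mod_2_eq_iff_even: "(a::nat) mod 2 = b mod 2 \<longleftrightarrow> (even a \<longleftrightarrow> even b)"
  by (cases "even a"; cases "even b") (simp_all add: even_iff_mod_2_eq_zero odd_iff_mod_2_eq_one)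

lemma odd_diff_mod_2_eq_iff:
  assumes "odd (m::nat)" "k < m"
  shows "(m - k) mod 2 = j mod 2 \<longleftrightarrow> k mod 2 \<noteq> j mod 2"
    and "j mod 2 = (m - k) mod 2 \<longleftrightarrow> j mod 2 \<noteq> k mod 2"
  using assms unfolding mod_2_eq_iff_even by (auto simp: even_diff_nat)

lemma finite_irr_index: "finite (irr_index m n)"
  by (rule finite_subset[of _ "{0<..<m} \<times> {0<..<n}"]) (auto simp: irr_index_def)

text \<open>For m odd, k \<mapsto> m - k swaps the index pairs of equal and of opposite parity (likewise for
  n odd); as m, n are coprime one of them is odd, so equal-parity pairs are half of all.\<close>
lemma card_irr_index:
  assumes "coprime m n"
  shows "2 * card (irr_index m n) = (m - 1) * (n - 1)"
proof -
  define J where "J = {(k, k'). 0 < k \<and> k < m \<and> 0 < k' \<and> k' < n \<and> k mod 2 \<noteq> k' mod 2}"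
  define R where "R = {0<..<m} \<times> {0<..<n}"
  have "finite J" by (rule finite_subset[of _ R]) (auto simp: R_def J_def)
  have R: "irr_index m n \<union> J = R" "irr_index m n \<inter> J = {}" unfolding R_def irr_index_def J_def by auto
  have "odd m \<or> odd n"
    using assms by (metis coprime_common_divisor_nat dvd_refl even_iff_mod_2_eq_zero odd_one)
  then have "card (irr_index m n) = card J"
  proof
    assume "odd m"
    have "bij_betw (\<lambda>(k, k'). (m - k, k')) (irr_index m n) J"
      by (rule bij_betw_byWitness[where f' = "\<lambda>(k, k'). (m - k, k')"])
         (use odd_diff_mod_2_eq_iff[OF \<open>odd m\<close>] in \<open>auto simp: irr_index_def J_def\<close>)
    then show ?thesis by (rule bij_betw_same_card)
  next
    assume "odd n"
    have "bij_betw (\<lambda>(k, k'). (k, n - k')) (irr_index m n) J"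
      by (rule bij_betw_byWitness[where f' = "\<lambda>(k, k'). (k, n - k')"])
         (use odd_diff_mod_2_eq_iff[OF \<open>odd n\<close>] in \<open>auto simp: irr_index_def J_def\<close>)
    then show ?thesis by (rule bij_betw_same_card)
  qed
  moreover have "card (irr_index m n) + card J = card R" using card_Un_disjoint[OF finite_irr_index \<open>finite J\<close> R(2)] R(1) by simp
  moreover have "card R = (m - 1) * (n - 1)" unfolding R_def by (simp add: card_cartesian_product)
  ultimately show ?thesis by simp
qed

lemma card_UN_irr_line_Int_red_curve:
  assumes "coprime m n"
  shows "card (\<Union>a\<in>irr_index m n. irr_line m n a \<inter> red_curve m n) = (m - 1) * (n - 1)"
proof -
  have "card (\<Union>a\<in>irr_index m n. irr_line m n a \<inter> red_curve m n)
      = (\<Sum>a\<in>irr_index m n. card (irr_line m n a \<inter> red_curve m n))"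
  proof (rule card_UN_disjoint[OF finite_irr_index])
    show "\<forall>a\<in>irr_index m n. finite (irr_line m n a \<inter> red_curve m n)"
      using card_irr_line_Int_red_curve[OF assms] by (metis card.infinite zero_neq_numeral)
  qed (use irr_line_disjoint in blast)
  also have "\<dots> = 2 * card (irr_index m n)" using card_irr_line_Int_red_curve[OF assms] by simp
  finally show ?thesis using card_irr_index[OF assms] by simp
qed

definition torus_components :: "nat \<Rightarrow> nat \<Rightarrow> pt3 set set" where
  "torus_components m n = insert (red_curve m n) (irr_line m n ` irr_index m n)"

lemma finite_torus_components: "finite (torus_components m n)"
  unfolding torus_components_def using finite_irr_index by simp

lemma iso_to_line_torus_components:
  assumes "coprime m n" "0 < m" "0 < n" "S \<in> torus_components m n"
  obtains \<phi> where "iso_to_line \<phi> S"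
  using assms(4) iso_to_line_red_param[OF assms(1-3)] iso_to_line_vline_param
  unfolding torus_components_def irr_line_def by blast

lemma torus_components_incomparable:
  assumes "coprime m n" "S \<in> torus_components m n" "S' \<in> torus_components m n" "S \<subseteq> S'"
  shows "S = S'"
proof -
  have "\<not> irr_line m n a \<subseteq> red_curve m n" if "a \<in> irr_index m n" for a
  proof
    assume "irr_line m n a \<subseteq> red_curve m n"
    then have "irr_line m n a \<inter> red_curve m n = irr_line m n a" by blast
    then show False
      using card_irr_line_Int_red_curve[OF assms(1) that] infinite_vline unfolding irr_line_def
      by (metis card.infinite zero_neq_numeral)
  qed
  moreover have "a = b" if "a \<in> irr_index m n" "b \<in> irr_index m n" "irr_line m n a \<subseteq> irr_line m n b" for a b
    using irr_line_disjoint[OF that(1,2)] that(3) infinite_vline unfolding irr_line_def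
    by (metis finite.emptyI inf.absorb1)
  ultimately show ?thesis
    using assms(2-4) red_curve_not_subset_irr_line unfolding torus_components_def by blast
qed

lemma Psi_charvar_Union:
  assumes "coprime m n" "0 < m" "0 < n"
  shows "Psi ` charvar m n = \<Union>(torus_components m n)"
  unfolding torus_components_def Psi_charvar[OF assms] by simp

lemma zcomponents_Psi_charvar:
  assumes "coprime m n" "0 < m" "0 < n"
  shows "zcomponents (Psi ` charvar m n) = torus_components m n"
  unfolding Psi_charvar_Union[OF assms]
proof (rule zcomponents_Union)
  show "finite (torus_components m n)" by (rule finite_torus_components)
  show "\<forall>F\<in>torus_components m n. zirred F"
    using iso_to_line_torus_components[OF assms] zirred_iso_to_line by metis
qed (use torus_components_incomparable[OF assms(1)] in blast)

lemma zclosed_Psi_charvar: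
  assumes "coprime m n" "0 < m" "0 < n"
  shows "zclosed (Psi ` charvar m n)"
proof -
  have "\<forall>F\<in>torus_components m n. zclosed F"
    using iso_to_line_torus_components[OF assms] zclosed_iso_to_line by metis
  then show ?thesis
    unfolding Psi_charvar_Union[OF assms] by (rule zclosed_Union[OF finite_torus_components])
qed

lemma card_torus_components:
  assumes "coprime m n"
  shows "card (torus_components m n) = (m - 1) * (n - 1) div 2 + 1"
proof -
  have "red_curve m n \<notin> irr_line m n ` irr_index m n" using red_curve_not_subset_irr_line by blast
  then have "card (torus_components m n) = card (irr_index m n) + 1"
    unfolding torus_components_def
    using finite_irr_index card_image[OF irr_line_inj_on] by simp
  then show ?thesis using card_irr_index[OF assms] by simp
qed

lemma points_on_two_members:
  assumes "\<forall>a\<in>I. \<forall>b\<in>I. a \<noteq> b \<longrightarrow> L a \<inter> L b = {}" "\<forall>a\<in>I. L a \<noteq> R" "\<Union>(insert R (L ` I)) \<subseteq> C"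
  shows "{p\<in>C. \<exists>S1\<in>insert R (L ` I). \<exists>S2\<in>insert R (L ` I). S1 \<noteq> S2 \<and> p \<in> S1 \<and> p \<in> S2}
    = (\<Union>a\<in>I. L a \<inter> R)" (is "?P = _")
proof (intro set_eqI iffI)
  fix p assume "p \<in> ?P"
  then obtain S1 S2 where S: "S1 \<in> insert R (L ` I)" "S2 \<in> insert R (L ` I)" "S1 \<noteq> S2" "p \<in> S1" "p \<in> S2"
    by blast
  consider "S1 = R" | "S2 = R" | a b where "a \<in> I" "b \<in> I" "S1 = L a" "S2 = L b"
    using S(1,2) by blast
  then show "p \<in> (\<Union>a\<in>I. L a \<inter> R)"
  proof cases
    case 1
    then obtain b where "b \<in> I" "S2 = L b" using S(2,3) by auto
    then show ?thesis using 1 S(4,5) by blast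
  next
    case 2
    then obtain a where "a \<in> I" "S1 = L a" using S(1,3) by auto
    then show ?thesis using 2 S(4,5) by blast
  next
    case 3
    then have "a = b" using S(3-5) assms(1) by blast
    then show ?thesis using 3 S(3) by simp
  qed
next
  fix p assume "p \<in> (\<Union>a\<in>I. L a \<inter> R)"
  then obtain a where "a \<in> I" "p \<in> L a" "p \<in> R" by blast
  moreover have "L a \<in> insert R (L ` I)" "R \<in> insert R (L ` I)" using \<open>a \<in> I\<close> by simp_all
  moreover have "L a \<noteq> R" "p \<in> C" using assms(2,3) \<open>a \<in> I\<close> \<open>p \<in> R\<close> by auto
  ultimately show "p \<in> ?P" by blast
qed

theorem theorem3p1:
  fixes m n :: nat
  assumes "0 < m" and "0 < n" and "coprime m n"
  defines "C \<equiv> Psi ` charvar m n"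
      and "Red \<equiv> Psi ` Xred m n"
      and "L \<equiv> (\<lambda>(k, k'). Psi ` Xirr_line m n k k')"
  shows
    \<comment> \<open>Psi is an isomorphism onto its image: injective, and every trace function
        is a polynomial in the three coordinates on X(G_{m,n})\<close>
    "inj_on Psi (charvar m n)
     \<and> (\<forall>w. \<exists>P. poly3_fun P \<and> (\<forall>ch\<in>charvar m n. ch w = P (Psi ch)))
     \<and> zclosed C
     \<comment> \<open>components\<close>
     \<and> zcomponents C = insert Red (L ` irr_index m n)
     \<and> card (zcomponents C) = (m - 1) * (n - 1) div 2 + 1
     \<and> (\<forall>S\<in>zcomponents C. \<exists>\<phi>. iso_to_line \<phi> S)
     \<comment> \<open>intersection pattern\<close>
     \<and> (\<forall>a\<in>irr_index m n. \<forall>b\<in>irr_index m n. a \<noteq> b \<longrightarrow> L a \<inter> L b = {})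
     \<and> (\<forall>a\<in>irr_index m n. card (L a \<inter> Red) = 2)
     \<and> card (\<Union>a\<in>irr_index m n. L a \<inter> Red) = (m - 1) * (n - 1)
     \<and> (\<forall>a\<in>irr_index m n. \<forall>p\<in>L a \<inter> Red. transversal_at (L a) Red p)
     \<comment> \<open>the singular (multiple) points of C are exactly these intersection points\<close>
     \<and> {p\<in>C. \<exists>S1\<in>zcomponents C. \<exists>S2\<in>zcomponents C. S1 \<noteq> S2 \<and> p \<in> S1 \<and> p \<in> S2}
        = (\<Union>a\<in>irr_index m n. L a \<inter> Red)"
proof -
  let ?I = "irr_index m n"
  have mn: "coprime m n" "0 < m" "0 < n" using assms(1-3) by simp_all
  have Red: "Red = red_curve m n" unfolding Red_def by (rule Psi_Xred)
  have L: "L a = irr_line m n a" if "a \<in> ?I" for a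
    using Psi_Xirr_line[of "fst a" "snd a"] that unfolding L_def by (simp add: case_prod_beta)
  have comps: "zcomponents C = torus_components m n" unfolding C_def by (rule zcomponents_Psi_charvar[OF mn])
  have comps': "zcomponents C = insert Red (L ` ?I)"
    unfolding comps torus_components_def Red using L by simp
  have L_Red: "\<forall>a\<in>?I. L a \<noteq> Red" using red_curve_not_subset_irr_line L Red by fastforce
  have L_disjoint: "\<forall>a\<in>?I. \<forall>b\<in>?I. a \<noteq> b \<longrightarrow> L a \<inter> L b = {}" using irr_line_disjoint L by simp
  have "{p\<in>C. \<exists>S1\<in>zcomponents C. \<exists>S2\<in>zcomponents C. S1 \<noteq> S2 \<and> p \<in> S1 \<and> p \<in> S2}
      = (\<Union>a\<in>?I. L a \<inter> Red)"
    unfolding comps'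
    by (rule points_on_two_members[OF L_disjoint L_Red Union_zcomponents_subset[of C, unfolded comps']])
  moreover have "card (zcomponents C) = (m - 1) * (n - 1) div 2 + 1"
    unfolding comps by (rule card_torus_components[OF mn(1)])
  moreover have "\<forall>S\<in>zcomponents C. \<exists>\<phi>. iso_to_line \<phi> S"
    using iso_to_line_torus_components[OF mn] unfolding comps by metis
  moreover have "\<forall>a\<in>?I. card (L a \<inter> Red) = 2"
    using card_irr_line_Int_red_curve[OF mn(1)] L Red by simp
  moreover have "card (\<Union>a\<in>?I. L a \<inter> Red) = (m - 1) * (n - 1)"
    using card_UN_irr_line_Int_red_curve[OF mn(1)] L Red by simp
  moreover have "\<forall>a\<in>?I. \<forall>p\<in>L a \<inter> Red. transversal_at (L a) Red p"
    using transversal_irr_line_red_curve[OF mn] L Red by simp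
  ultimately show ?thesis
    using inj_on_Psi_charvar charvar_poly3_Psi zclosed_Psi_charvar[OF mn, folded C_def] comps' L_disjoint
    by (intro conjI) auto
qed

end
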